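(* Let $D$ be an integral domain with quotient field $K$, $X,Y$ indeterminates, $\star$ a semistar operation on $D$, $D_1:=D[X]$, $K_1:=K(X)$. Let $\boldsymbol\Delta_1^\star:=\{Q_1\in\mathrm{Spec}(D_1)\mid Q_1\cap D=(0),\ \text{or } Q_1=(Q_1\cap D)[X]\text{ and }(Q_1\cap D)^{\star_f}\subsetneq D^\star\}$, $\mathcal S_1^\star:=D_1[Y]\setminus\bigcup\{Q_1[Y]\mid Q_1\in\boldsymbol\Delta_1^\star\}$, and define $[\star]:\overline{\boldsymbol F}(D_1)\to\overline{\boldsymbol F}(D_1)$ by $E^{[\star]}:=E[Y]_{\mathcal S_1^\star}\cap K_1$. Then: (a) $[\star]$ is a stable semistar operation of finite type on $D[X]$, i.e. $\widetilde{[\star]}=[\star]$; moreover, if $\star$ is a (semi)star operation on $D$ then $[\star]$ is a (semi)star operation on $D[X]$; (b) $[\widetilde\star]=[\star_f]=[\star]$.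
   Context: $\overline{\boldsymbol F}(A)$ is the set of nonzero $A$-submodules of the quotient field of a domain $A$. A semistar operation on $A$ is a map $\star:\overline{\boldsymbol F}(A)\to\overline{\boldsymbol F}(A)$ with $(xE)^\star=xE^\star$ for nonzero $x$ in the quotient field, $E\subseteq F\Rightarrow E^\star\subseteq F^\star$, $E\subseteq E^\star$, $(E^\star)^\star=E^\star$; a (semi)star operation if $A^\star=A$. $E^{\star_f}=\bigcup\{F^\star\mid F\subseteq E,\ F$ nonzero finitely generated fractional ideal$\}$; $\star$ is of finite type if $\star=\star_f$; stable if $(E\cap F)^\star=E^\star\cap F^\star$. A nonzero ideal $I$ is a quasi-$\star$-ideal if $I^\star\cap A=I$; $\mathrm{QMax}^\star(A)$ is the set of maximal elements among proper quasi-$\star$-ideals. $\widetilde\star$ is the semistar operation $E\mapsto\bigcap\{EA_P\mid P\in\mathrm{QMax}^{\star_f}(A)\}$. $E[Y]_{\mathcal S_1^\star}$ is the $D_1[Y]_{\mathcal S_1^\star}$-submodule of $K(X,Y)$ generated by $E$. *)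

theory Defs
  imports "HOL-Computational_Algebra.Polynomial" "HOL-Computational_Algebra.Fraction_Field"
begin

definition gen_mod :: "'a::comm_ring_1 set \<Rightarrow> 'a set \<Rightarrow> 'a set" where
  "gen_mod R S = \<Inter>{M. 0 \<in> M \<and> S \<subseteq> M \<and> (\<forall>x\<in>M. \<forall>y\<in>M. x + y \<in> M)
                        \<and> (\<forall>r\<in>R. \<forall>x\<in>M. r * x \<in> M)}"

definition is_submod :: "'a::comm_ring_1 set \<Rightarrow> 'a set \<Rightarrow> bool" where
  "is_submod R M \<longleftrightarrow> 0 \<in> M \<and> (\<forall>x\<in>M. \<forall>y\<in>M. x + y \<in> M) \<and> (\<forall>r\<in>R. \<forall>x\<in>M. r * x \<in> M)"

definition is_subring :: "'a::comm_ring_1 set \<Rightarrow> bool" where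
  "is_subring R \<longleftrightarrow> 0 \<in> R \<and> 1 \<in> R \<and> (\<forall>x\<in>R. \<forall>y\<in>R. x + y \<in> R \<and> x - y \<in> R \<and> x * y \<in> R)"

definition is_ideal :: "'a::comm_ring_1 set \<Rightarrow> 'a set \<Rightarrow> bool" where
  "is_ideal R I \<longleftrightarrow> I \<subseteq> R \<and> is_submod R I"

definition prime_ideal :: "'a::comm_ring_1 set \<Rightarrow> 'a set \<Rightarrow> bool" where
  "prime_ideal R P \<longleftrightarrow> is_ideal R P \<and> P \<noteq> R \<and> (\<forall>a\<in>R. \<forall>b\<in>R. a * b \<in> P \<longrightarrow> a \<in> P \<or> b \<in> P)"

section \<open>Semistar operations on a subring A of a field L (L = quotient field of A)\<close>

definition Fbar :: "'f::field set \<Rightarrow> 'f set set" where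
  "Fbar A = {E. is_submod A E \<and> E \<noteq> {0}}"

definition semistar :: "'f::field set \<Rightarrow> ('f set \<Rightarrow> 'f set) \<Rightarrow> bool" where
  "semistar A st \<longleftrightarrow>
     (\<forall>E\<in>Fbar A. st E \<in> Fbar A) \<and>
     (\<forall>x E. x \<noteq> 0 \<longrightarrow> E \<in> Fbar A \<longrightarrow> st ((\<lambda>e. x * e) ` E) = (\<lambda>e. x * e) ` st E) \<and>
     (\<forall>E\<in>Fbar A. \<forall>F\<in>Fbar A. E \<subseteq> F \<longrightarrow> st E \<subseteq> st F) \<and>
     (\<forall>E\<in>Fbar A. E \<subseteq> st E) \<and>
     (\<forall>E\<in>Fbar A. st (st E) = st E)"

definition fg_frac :: "'f::field set \<Rightarrow> 'f set \<Rightarrow> bool" where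
  "fg_frac A F \<longleftrightarrow> (\<exists>S. finite S \<and> F = gen_mod A S) \<and> F \<noteq> {0} \<and>
                    (\<exists>d\<in>A. d \<noteq> 0 \<and> (\<forall>x\<in>F. d * x \<in> A))"

definition star_f :: "'f::field set \<Rightarrow> ('f set \<Rightarrow> 'f set) \<Rightarrow> 'f set \<Rightarrow> 'f set" where
  "star_f A st E = \<Union>{st F | F. fg_frac A F \<and> F \<subseteq> E}"

definition finite_type :: "'f::field set \<Rightarrow> ('f set \<Rightarrow> 'f set) \<Rightarrow> bool" where
  "finite_type A st \<longleftrightarrow> (\<forall>E\<in>Fbar A. st E = star_f A st E)"

definition stable :: "'f::field set \<Rightarrow> ('f set \<Rightarrow> 'f set) \<Rightarrow> bool" where
  "stable A st \<longleftrightarrow> (\<forall>E\<in>Fbar A. \<forall>F\<in>Fbar A. st (E \<inter> F) = st E \<inter> st F)"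

definition eq_on_Fbar :: "'f::field set \<Rightarrow> ('f set \<Rightarrow> 'f set) \<Rightarrow> ('f set \<Rightarrow> 'f set) \<Rightarrow> bool" where
  "eq_on_Fbar A st1 st2 \<longleftrightarrow> (\<forall>E\<in>Fbar A. st1 E = st2 E)"

definition quasi_ideal :: "'f::field set \<Rightarrow> ('f set \<Rightarrow> 'f set) \<Rightarrow> 'f set \<Rightarrow> bool" where
  "quasi_ideal A st I \<longleftrightarrow> is_ideal A I \<and> I \<noteq> {0} \<and> st I \<inter> A = I"

definition QMax :: "'f::field set \<Rightarrow> ('f set \<Rightarrow> 'f set) \<Rightarrow> 'f set set" where
  "QMax A st = {P. quasi_ideal A st P \<and> P \<noteq> A \<and>
                   (\<forall>Q. quasi_ideal A st Q \<and> Q \<noteq> A \<and> P \<subseteq> Q \<longrightarrow> Q = P)}"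

definition localization :: "'f::field set \<Rightarrow> 'f set \<Rightarrow> 'f set" where
  "localization A P = {a / s | a s. a \<in> A \<and> s \<in> A \<and> s \<notin> P}"

definition tilde :: "'f::field set \<Rightarrow> ('f set \<Rightarrow> 'f set) \<Rightarrow> 'f set \<Rightarrow> 'f set" where
  "tilde A st E = \<Inter>{gen_mod (localization A P) E | P. P \<in> QMax A (star_f A st)}"

definition to_fract :: "'a::idom \<Rightarrow> 'a fract" where
  "to_fract a = Fract a 1"

text \<open>D is a subring of the field 'k (its quotient field K = 'k). D[X] is a subset of 'k poly,
  K(X) = 'k poly fract, K(X,Y) = ('k poly fract) poly fract.\<close>

definition quot_field_of :: "'k::field set \<Rightarrow> bool" where
  "quot_field_of D \<longleftrightarrow> (\<forall>x. \<exists>a\<in>D. \<exists>b\<in>D. b \<noteq> 0 \<and> x = a / b)"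

definition DX :: "'k::field set \<Rightarrow> 'k poly set" where
  "DX I = {p. \<forall>i. coeff p i \<in> I}"

definition A1 :: "'k::field set \<Rightarrow> 'k poly fract set" where
  "A1 D = to_fract ` DX D"

definition contr :: "'k::field set \<Rightarrow> 'k poly set \<Rightarrow> 'k set" where
  "contr D Q = {d \<in> D. [:d:] \<in> Q}"

definition Delta1 :: "'k::field set \<Rightarrow> ('k set \<Rightarrow> 'k set) \<Rightarrow> 'k poly set set" where
  "Delta1 D st = {Q. prime_ideal (DX D) Q \<and>
      (contr D Q = {0} \<or> (Q = DX (contr D Q) \<and> star_f D st (contr D Q) \<subset> st D))}"

definition polyY :: "'k::field poly set \<Rightarrow> 'k poly fract poly set" where
  "polyY Q = {g. \<forall>i. coeff g i \<in> to_fract ` Q}"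

definition S1 :: "'k::field set \<Rightarrow> ('k set \<Rightarrow> 'k set) \<Rightarrow> 'k poly fract poly set" where
  "S1 D st = polyY (DX D) - \<Union>{polyY Q | Q. Q \<in> Delta1 D st}"

definition locS1 :: "'k::field set \<Rightarrow> ('k set \<Rightarrow> 'k set) \<Rightarrow> 'k poly fract poly fract set" where
  "locS1 D st = {to_fract g / to_fract s | g s. g \<in> polyY (DX D) \<and> s \<in> S1 D st}"

definition embY :: "'k::field poly fract \<Rightarrow> 'k poly fract poly fract" where
  "embY u = to_fract [:u:]"

text \<open>\<open>E^{[st]} = E[Y]_{S_1} \<inter> K_1\<close>.\<close>
definition bracket :: "'k::field set \<Rightarrow> ('k set \<Rightarrow> 'k set) \<Rightarrow> 'k poly fract set \<Rightarrow> 'k poly fract set" where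
  "bracket D st E = {u. embY u \<in> gen_mod (locS1 D st) (embY ` E)}"

end

theory Submission
  imports Defs
begin

text \<open>
  Plan. (1) General theory of a semistar operation \<open>\<star>\<close> on a domain \<open>D\<close>: its finite-type
  companion \<open>\<star>\<^sub>f\<close>, the existence of quasi-\<open>\<star>\<^sub>f\<close>-maximal ideals (Zorn), their primality,
  \<open>\<star>\<^sup>~ \<le> \<star>\<^sub>f\<close>, and \<open>\<star> = \<star>\<^sup>~\<close> for stable operations of finite type.
  (2) The condition \<open>(Q \<inter> D)\<^sup>\<star>\<^sup>f \<subset> D\<^sup>\<star>\<close> in \<open>\<Delta>\<^sub>1\<^sup>\<star>\<close> only says \<open>1 \<notin> (Q \<inter> D)\<^sup>\<star>\<^sup>f\<close>, which is
  the same for \<open>\<star>\<close>, \<open>\<star>\<^sub>f\<close> and \<open>\<star>\<^sup>~\<close>; hence \<open>\<Delta>\<^sub>1\<close>, \<open>S\<^sub>1\<close> and \<open>[\<star>]\<close> agree for them (part (b)).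
  (3) Polynomial facts: \<open>P[X]\<close> is prime for prime \<open>P\<close>, and a Gauss-type cancellation lemma.
  (4) Since \<open>S\<^sub>1\<close> is multiplicative, \<open>u \<in> E\<^sup>[\<^sup>\<star>\<^sup>]\<close> iff \<open>u s \<in> E[Y]\<close> for some \<open>s \<in> S\<^sub>1\<close>; from this
  \<open>[\<star>]\<close> is a stable semistar operation of finite type, so \<open>[\<star>] = [\<star>]\<^sup>~\<close> by (1).
  (5) If \<open>D\<^sup>\<star> = D\<close>, an element of \<open>D[X]\<^sup>[\<^sup>\<star>\<^sup>]\<close> lies in \<open>K[X]\<close> (uppers to zero are in \<open>\<Delta>\<^sub>1\<close>)
  and in \<open>D\<^sub>M[X]\<close> for every quasi-\<open>\<star>\<^sub>f\<close>-maximal \<open>M\<close> (as \<open>M[X] \<in> \<Delta>\<^sub>1\<close>), hence in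
  \<open>D\<^sup>\<star>\<^sup>~[X] \<subseteq> D[X]\<close>.
\<close>

lemma gen_mod_least:
  assumes "0 \<in> M" "S \<subseteq> M" "\<And>x y. x \<in> M \<Longrightarrow> y \<in> M \<Longrightarrow> x + y \<in> M"
    "\<And>r x. r \<in> R \<Longrightarrow> x \<in> M \<Longrightarrow> r * x \<in> M"
  shows "gen_mod R S \<subseteq> M"
  unfolding gen_mod_def using assms by (intro Inter_lower) simp

lemma gen_mod_mem: "x \<in> gen_mod R S \<longleftrightarrow> (\<forall>M. 0 \<in> M \<and> S \<subseteq> M \<and> (\<forall>x\<in>M. \<forall>y\<in>M. x + y \<in> M)
                        \<and> (\<forall>r\<in>R. \<forall>x\<in>M. r * x \<in> M) \<longrightarrow> x \<in> M)"
  unfolding gen_mod_def by simp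

lemma gen_mod_sub: "S \<subseteq> gen_mod R S"
  by (auto simp: gen_mod_mem)
lemma gen_mod_0: "0 \<in> gen_mod R S"
  by (auto simp: gen_mod_mem)
lemma gen_mod_add: "x \<in> gen_mod R S \<Longrightarrow> y \<in> gen_mod R S \<Longrightarrow> x + y \<in> gen_mod R S"
  by (auto simp: gen_mod_mem)
lemma gen_mod_mult: "r \<in> R \<Longrightarrow> x \<in> gen_mod R S \<Longrightarrow> r * x \<in> gen_mod R S"
  by (auto simp: gen_mod_mem)
lemma gen_mod_submod: "is_submod R (gen_mod R S)"
  unfolding is_submod_def using gen_mod_0 gen_mod_add gen_mod_mult by blast

lemma gen_mod_subset_submod: "is_submod R M \<Longrightarrow> S \<subseteq> M \<Longrightarrow> gen_mod R S \<subseteq> M"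
  by (rule gen_mod_least) (auto simp: is_submod_def)

lemma gen_mod_mono: "S \<subseteq> T \<Longrightarrow> gen_mod R S \<subseteq> gen_mod R T"
  by (meson gen_mod_sub gen_mod_submod gen_mod_subset_submod order_trans)

lemma gen_mod_idem: "gen_mod R (gen_mod R S) = gen_mod R S"
  by (meson gen_mod_sub gen_mod_submod gen_mod_subset_submod subset_antisym)

lemma gen_mod_sum: "finite I \<Longrightarrow> (\<And>i. i \<in> I \<Longrightarrow> f i \<in> gen_mod R S) \<Longrightarrow> sum f I \<in> gen_mod R S"
  by (induction I rule: finite_induct) (auto intro: gen_mod_0 gen_mod_add)

lemma gen_mod_scale:
  fixes c :: "'f::field"
  assumes c: "c \<noteq> 0"
  shows "gen_mod R ((*) c ` S) = (*) c ` gen_mod R S"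
proof
  show "gen_mod R ((*) c ` S) \<subseteq> (*) c ` gen_mod R S"
  proof (rule gen_mod_least)
    show "0 \<in> (*) c ` gen_mod R S" using gen_mod_0 by force
    show "(*) c ` S \<subseteq> (*) c ` gen_mod R S" using gen_mod_sub by blast
    show "x + y \<in> (*) c ` gen_mod R S"
      if "x \<in> (*) c ` gen_mod R S" "y \<in> (*) c ` gen_mod R S" for x y
      using that by (auto simp flip: distrib_left intro: gen_mod_add)
    show "r * x \<in> (*) c ` gen_mod R S" if "r \<in> R" "x \<in> (*) c ` gen_mod R S" for r x
      using that by (auto simp: mult.left_commute[of r c] intro: gen_mod_mult)
  qed
  have "gen_mod R S \<subseteq> {x. c * x \<in> gen_mod R ((*) c ` S)}"
    by (rule gen_mod_least)
       (auto simp: distrib_left mult.left_commute[of c] intro: gen_mod_0 gen_mod_add gen_mod_mult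
             gen_mod_sub[THEN subsetD])
  then show "(*) c ` gen_mod R S \<subseteq> gen_mod R ((*) c ` S)" by blast
qed

lemma subring_0: "is_subring R \<Longrightarrow> 0 \<in> R" by (simp add: is_subring_def)
lemma subring_1: "is_subring R \<Longrightarrow> 1 \<in> R" by (simp add: is_subring_def)
lemma subring_add: "is_subring R \<Longrightarrow> x \<in> R \<Longrightarrow> y \<in> R \<Longrightarrow> x + y \<in> R" by (simp add: is_subring_def)
lemma subring_diff: "is_subring R \<Longrightarrow> x \<in> R \<Longrightarrow> y \<in> R \<Longrightarrow> x - y \<in> R" by (simp add: is_subring_def)
lemma subring_mult: "is_subring R \<Longrightarrow> x \<in> R \<Longrightarrow> y \<in> R \<Longrightarrow> x * y \<in> R" by (simp add: is_subring_def)
lemma subring_sum: "finite I \<Longrightarrow> is_subring R \<Longrightarrow> (\<And>i. i \<in> I \<Longrightarrow> f i \<in> R) \<Longrightarrow> sum f I \<in> R"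
  by (induction I rule: finite_induct) (auto simp: subring_0 subring_add)
lemma subring_submod: "is_subring R \<Longrightarrow> is_submod R R"
  by (simp add: is_submod_def subring_0 subring_add subring_mult)

lemma submod_0: "is_submod R M \<Longrightarrow> 0 \<in> M" by (simp add: is_submod_def)
lemma submod_add: "is_submod R M \<Longrightarrow> x \<in> M \<Longrightarrow> y \<in> M \<Longrightarrow> x + y \<in> M" by (simp add: is_submod_def)
lemma submod_mult: "is_submod R M \<Longrightarrow> r \<in> R \<Longrightarrow> x \<in> M \<Longrightarrow> r * x \<in> M" by (simp add: is_submod_def)
lemma submod_sum: "finite I \<Longrightarrow> is_submod R M \<Longrightarrow> (\<And>i. i \<in> I \<Longrightarrow> f i \<in> M) \<Longrightarrow> sum f I \<in> M"
  by (induction I rule: finite_induct) (auto simp: is_submod_def)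
lemma submod_diff: "is_subring R \<Longrightarrow> is_submod R M \<Longrightarrow> x \<in> M \<Longrightarrow> y \<in> M \<Longrightarrow> x - y \<in> M"
  using submod_add submod_mult[of R M "-1"] subring_diff[of R 0 1]
  by (metis diff_conv_add_uminus diff_0 mult_minus1 subring_0 subring_1)
lemma submod_Int: "is_submod A M \<Longrightarrow> is_submod A N \<Longrightarrow> is_submod A (M \<inter> N)"
  unfolding is_submod_def by blast

lemma submod_scale: "is_submod A E \<Longrightarrow> is_submod A ((*) c ` E)"
  unfolding is_submod_def
  by (auto simp flip: distrib_left simp: mult.left_commute[of _ c] image_iff intro: bexI[of _ 0])

lemma gen_mod_single: "is_subring R \<Longrightarrow> gen_mod R {x} = {r * x | r. r \<in> R}"
proof
  assume R: "is_subring R"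
  show "gen_mod R {x} \<subseteq> {r * x | r. r \<in> R}"
  proof (rule gen_mod_least)
    show "0 \<in> {r * x | r. r \<in> R}" using subring_0[OF R] by force
    show "{x} \<subseteq> {r * x | r. r \<in> R}" using subring_1[OF R] by force
  qed (use R in \<open>auto simp flip: distrib_right mult.assoc intro: subring_add subring_mult\<close>)
  show "{r * x | r. r \<in> R} \<subseteq> gen_mod R {x}"
    using gen_mod_mult gen_mod_sub by blast
qed

lemma ideal_submod: "is_ideal A I \<Longrightarrow> is_submod A I" by (simp add: is_ideal_def)
lemma ideal_sub: "is_ideal A I \<Longrightarrow> I \<subseteq> A" by (simp add: is_ideal_def)

lemma ideal_one: "is_ideal A (I::'a::comm_ring_1 set) \<Longrightarrow> 1 \<in> I \<Longrightarrow> I = A"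
  unfolding is_ideal_def is_submod_def by (metis mult.right_neutral subsetI subset_antisym)

lemma prime_ideal_ideal: "prime_ideal A P \<Longrightarrow> is_ideal A P" by (simp add: prime_ideal_def)
lemma prime_ideal_mult: "prime_ideal A P \<Longrightarrow> a \<in> A \<Longrightarrow> b \<in> A \<Longrightarrow> a * b \<in> P \<Longrightarrow> a \<in> P \<or> b \<in> P"
  by (simp add: prime_ideal_def)
lemma prime_ideal_one: "prime_ideal A P \<Longrightarrow> 1 \<notin> P"
  using ideal_one by (auto simp: prime_ideal_def)
lemma prime_ideal_0: "prime_ideal A P \<Longrightarrow> 0 \<in> P"
  by (simp add: prime_ideal_def is_ideal_def is_submod_def)

locale frac_domain =
  fixes D :: "'f::field set"
  assumes sub: "is_subring D" and qf: "quot_field_of D"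

lemma Fbar_submod: "E \<in> Fbar A \<Longrightarrow> is_submod A E" by (simp add: Fbar_def)
lemma Fbar_ne: "E \<in> Fbar A \<Longrightarrow> \<exists>e\<in>E. e \<noteq> 0"
  by (auto simp: Fbar_def is_submod_def)
lemma FbarI: "is_submod A E \<Longrightarrow> e \<in> E \<Longrightarrow> e \<noteq> 0 \<Longrightarrow> E \<in> Fbar A"
  by (auto simp: Fbar_def)

lemma Fbar_scale: "E \<in> Fbar A \<Longrightarrow> c \<noteq> 0 \<Longrightarrow> (*) c ` E \<in> Fbar A"
  using FbarI[OF submod_scale[OF Fbar_submod]] Fbar_ne by (metis image_eqI mult_eq_0_iff)

lemma ideal_Fbar: "is_ideal A I \<Longrightarrow> I \<noteq> {0} \<Longrightarrow> I \<in> Fbar A"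
  unfolding is_ideal_def Fbar_def by blast

lemma fg_Fbar: "fg_frac A F \<Longrightarrow> F \<in> Fbar A"
  unfolding fg_frac_def Fbar_def using gen_mod_submod by blast

lemma fg_gens: "fg_frac A F \<Longrightarrow> \<exists>T. finite T \<and> F = gen_mod A T"
  unfolding fg_frac_def by blast

context frac_domain
begin

lemma subring_Fbar: "D \<in> Fbar D"
  using FbarI[of D D 1] subring_submod sub subring_1 by auto

lemma fin_denom:
  assumes "finite S"
  shows "\<exists>d\<in>D. d \<noteq> 0 \<and> (\<forall>s\<in>S. d * s \<in> D)"
  using assms
proof (induction S rule: finite_induct)
  case empty then show ?case using sub by (auto intro!: bexI[of _ 1] simp: subring_1)
next
  case (insert x S)
  then obtain d where d: "d \<in> D" "d \<noteq> 0" "\<forall>s\<in>S. d * s \<in> D" by blast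
  obtain a b where ab: "a \<in> D" "b \<in> D" "b \<noteq> 0" "x = a / b"
    using qf unfolding quot_field_of_def by blast
  have "d * b * x = d * a" "\<And>s. d * b * s = b * (d * s)" using ab by (simp_all add: ac_simps)
  then have "\<forall>s\<in>insert x S. d * b * s \<in> D" using d ab sub subring_mult by (metis insert_iff)
  moreover have "d * b \<in> D" "d * b \<noteq> 0" using d ab sub subring_mult by auto
  ultimately show ?case by blast
qed

lemma fg_gen:
  assumes "finite S" "gen_mod D S \<noteq> {0}"
  shows "fg_frac D (gen_mod D S)"
proof -
  obtain d where d: "d \<in> D" "d \<noteq> 0" "\<forall>s\<in>S. d * s \<in> D" using fin_denom assms by blast
  have "gen_mod D S \<subseteq> {x. d * x \<in> D}"
    by (rule gen_mod_least)
       (use d sub in \<open>auto simp: subring_0 distrib_left subring_add mult.left_commute[of d] subring_mult\<close>)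
  then show ?thesis unfolding fg_frac_def using assms d by blast
qed

lemma fg_single: "x \<noteq> 0 \<Longrightarrow> fg_frac D (gen_mod D {x})"
  using fg_gen[of "{x}"] gen_mod_sub[of "{x}" D] by auto

lemma fg_whole: "fg_frac D D"
  using fg_single[of 1] gen_mod_single[OF sub, of 1] by simp

lemma fg_scale:
  assumes F: "fg_frac D F" and b: "b \<noteq> 0"
  shows "fg_frac D ((*) b ` F)"
proof -
  obtain T where T: "finite T" "F = gen_mod D T" using fg_gens[OF F] by blast
  have "(*) b ` F = gen_mod D ((*) b ` T)" using gen_mod_scale[OF b] T by simp
  moreover obtain f where "f \<in> F" "f \<noteq> 0" using Fbar_ne[OF fg_Fbar[OF F]] by blast
  then have "(*) b ` F \<noteq> {0}" using b by (metis image_eqI mult_eq_0_iff singletonD)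
  ultimately show ?thesis using fg_gen T by simp
qed

lemma colon_ideal:
  assumes E: "E \<in> Fbar D"
  shows "is_ideal D {a \<in> D. a * x \<in> E}" "{a \<in> D. a * x \<in> E} \<noteq> {0}"
proof -
  have EM: "is_submod D E" using Fbar_submod[OF E] .
  show "is_ideal D {a \<in> D. a * x \<in> E}"
    unfolding is_ideal_def is_submod_def using EM sub
    by (auto simp: distrib_right mult.assoc submod_0 submod_add submod_mult subring_0 subring_add
        subring_mult)
  obtain e where e: "e \<in> E" "e \<noteq> 0" using Fbar_ne[OF E] by blast
  obtain c d where cd: "c \<in> D" "d \<in> D" "d \<noteq> 0" "e = c / d"
    using qf unfolding quot_field_of_def by blast
  obtain a b where ab: "a \<in> D" "b \<in> D" "b \<noteq> 0" "x = a / b"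
    using qf unfolding quot_field_of_def by blast
  have "(b * c) * x = (a * d) * e" using ab cd by simp
  moreover have "(a * d) * e \<in> E" using submod_mult[OF EM _ e(1)] subring_mult[OF sub ab(1) cd(2)] by blast
  moreover have "b * c \<in> D" "b * c \<noteq> 0" using subring_mult[OF sub ab(2) cd(1)] ab cd e by auto
  ultimately show "{a \<in> D. a * x \<in> E} \<noteq> {0}" by (metis (mono_tags, lifting) mem_Collect_eq singletonD)
qed

end

section \<open>Semistar operations and their finite-type companion\<close>

lemma sf_mono: "E \<subseteq> E' \<Longrightarrow> star_f A st E \<subseteq> star_f A st E'"
  unfolding star_f_def by blast

lemma sf_memI: "fg_frac A F \<Longrightarrow> F \<subseteq> E \<Longrightarrow> x \<in> st F \<Longrightarrow> x \<in> star_f A st E"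
  unfolding star_f_def by blast

lemma sf_memE: "x \<in> star_f A st E \<Longrightarrow> (\<And>F. fg_frac A F \<Longrightarrow> F \<subseteq> E \<Longrightarrow> x \<in> st F \<Longrightarrow> P) \<Longrightarrow> P"
  unfolding star_f_def by blast

locale semistar_domain = frac_domain +
  fixes st :: "'f::field set \<Rightarrow> 'f set"
  assumes ss: "semistar D st"
begin

abbreviation sf where "sf \<equiv> star_f D st"

lemma st_Fbar: "E \<in> Fbar D \<Longrightarrow> st E \<in> Fbar D" using ss by (simp add: semistar_def)
lemma st_mono: "E \<in> Fbar D \<Longrightarrow> F \<in> Fbar D \<Longrightarrow> E \<subseteq> F \<Longrightarrow> st E \<subseteq> st F"
  using ss by (simp add: semistar_def)
lemma st_ext: "E \<in> Fbar D \<Longrightarrow> E \<subseteq> st E" using ss by (simp add: semistar_def)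
lemma st_idem: "E \<in> Fbar D \<Longrightarrow> st (st E) = st E" using ss by (simp add: semistar_def)
lemma st_homog: "x \<noteq> 0 \<Longrightarrow> E \<in> Fbar D \<Longrightarrow> st ((*) x ` E) = (*) x ` st E"
  using ss by (simp add: semistar_def)
lemma st_submod: "E \<in> Fbar D \<Longrightarrow> is_submod D (st E)" using st_Fbar Fbar_submod by blast

lemma sf_le: "E \<in> Fbar D \<Longrightarrow> sf E \<subseteq> st E"
  unfolding star_f_def using st_mono fg_Fbar by blast

lemma sf_fg: "fg_frac D F \<Longrightarrow> sf F = st F"
  using sf_le fg_Fbar sf_memI[of D F F _ st] by blast

lemma sf_ext: "E \<in> Fbar D \<Longrightarrow> E \<subseteq> sf E"
proof
  fix x assume E: "E \<in> Fbar D" and x: "x \<in> E"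
  obtain e where e: "e \<in> E" "e \<noteq> 0" using Fbar_ne E by blast
  define y where "y = (if x = 0 then e else x)"
  have y: "y \<in> E" "y \<noteq> 0" using e x by (auto simp: y_def)
  have F: "fg_frac D (gen_mod D {y})" using fg_single y by blast
  have "gen_mod D {y} \<subseteq> E" using gen_mod_subset_submod Fbar_submod E y by blast
  moreover have "x \<in> st (gen_mod D {y})"
    using st_ext[OF fg_Fbar[OF F]] st_submod[OF fg_Fbar[OF F]] gen_mod_sub submod_0
    by (cases "x = 0") (auto simp: y_def)
  ultimately show "x \<in> sf E" using sf_memI F by blast
qed

lemma sf_collect:
  assumes "finite S" "S \<subseteq> sf E" "E \<in> Fbar D"
  shows "\<exists>F. fg_frac D F \<and> F \<subseteq> E \<and> S \<subseteq> st F"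
  using assms(1,2)
proof (induction S rule: finite_induct)
  case empty
  obtain e where "e \<in> E" "e \<noteq> 0" using Fbar_ne assms(3) by blast
  then have "fg_frac D (gen_mod D {e}) \<and> gen_mod D {e} \<subseteq> E"
    using fg_single gen_mod_subset_submod Fbar_submod assms(3) by blast
  then show ?case by blast
next
  case (insert s S)
  then obtain F where F: "fg_frac D F" "F \<subseteq> E" "S \<subseteq> st F" by blast
  have "s \<in> sf E" using insert.prems by simp
  then obtain G where G: "fg_frac D G" "G \<subseteq> E" "s \<in> st G" by (rule sf_memE)
  obtain T where T: "finite T" "F = gen_mod D T" using fg_gens[OF F(1)] by blast
  obtain U where U: "finite U" "G = gen_mod D U" using fg_gens[OF G(1)] by blast
  let ?H = "gen_mod D (T \<union> U)"
  have "T \<subseteq> E" "U \<subseteq> E"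
    using gen_mod_sub[of T D] gen_mod_sub[of U D] T(2) U(2) F(2) G(2) by simp_all
  then have HE: "?H \<subseteq> E" using gen_mod_subset_submod[OF Fbar_submod[OF assms(3)]] by simp
  have FH: "F \<subseteq> ?H" and GH: "G \<subseteq> ?H"
    using T(2) U(2) gen_mod_mono[of T "T \<union> U" D] gen_mod_mono[of U "T \<union> U" D] by simp_all
  have "F \<noteq> {0}" using F(1) by (simp add: fg_frac_def)
  then have "?H \<noteq> {0}" using FH gen_mod_0[of D T] T(2) by blast
  then have fgH: "fg_frac D ?H" using fg_gen T(1) U(1) by simp
  have "st F \<subseteq> st ?H" "st G \<subseteq> st ?H"
    using st_mono[OF fg_Fbar[OF F(1)] fg_Fbar[OF fgH] FH] st_mono[OF fg_Fbar[OF G(1)] fg_Fbar[OF fgH] GH]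
    by simp_all
  then have "insert s S \<subseteq> st ?H" using F(3) G(3) by blast
  then show ?case using fgH HE by blast
qed

lemma sf_submod: "E \<in> Fbar D \<Longrightarrow> is_submod D (sf E)"
  unfolding is_submod_def
proof (intro conjI ballI)
  assume E: "E \<in> Fbar D"
  show "0 \<in> sf E" using sf_ext E Fbar_submod submod_0 by blast
  fix x y assume "x \<in> sf E" "y \<in> sf E"
  then obtain F where F: "fg_frac D F" "F \<subseteq> E" "{x,y} \<subseteq> st F"
    using sf_collect[of "{x,y}" E] E by blast
  then have "x + y \<in> st F" using st_submod[OF fg_Fbar[OF F(1)]] submod_add by (metis insert_subset)
  then show "x + y \<in> sf E" using sf_memI F by blast
next
  fix r x assume r: "r \<in> D" and "x \<in> sf E"
  then obtain F where F: "fg_frac D F" "F \<subseteq> E" "x \<in> st F" by (meson sf_memE)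
  then have "r * x \<in> st F" using st_submod fg_Fbar submod_mult r by blast
  then show "r * x \<in> sf E" using sf_memI F by blast
qed

lemma sf_Fbar: "E \<in> Fbar D \<Longrightarrow> sf E \<in> Fbar D"
  using sf_submod sf_ext Fbar_ne FbarI by (metis subsetD)

lemma sf_idem: "E \<in> Fbar D \<Longrightarrow> sf (sf E) = sf E"
proof (rule subset_antisym)
  assume E: "E \<in> Fbar D"
  show "sf (sf E) \<subseteq> sf E"
  proof
    fix x assume "x \<in> sf (sf E)"
    then obtain G where G: "fg_frac D G" "G \<subseteq> sf E" "x \<in> st G" by (meson sf_memE)
    obtain S where S: "finite S" "G = gen_mod D S" using fg_gens[OF G(1)] by blast
    have "S \<subseteq> sf E" using S G gen_mod_sub by blast
    then obtain F where F: "fg_frac D F" "F \<subseteq> E" "S \<subseteq> st F" using sf_collect[OF S(1) _ E] by blast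
    have FF: "F \<in> Fbar D" using fg_Fbar[OF F(1)] .
    have "G \<subseteq> st F" using S(2) gen_mod_subset_submod[OF st_submod[OF FF] F(3)] by simp
    then have "x \<in> st F" using st_mono[OF fg_Fbar[OF G(1)] st_Fbar[OF FF]] st_idem[OF FF] G(3) by blast
    then show "x \<in> sf E" using sf_memI F(1,2) by blast
  qed
  show "sf E \<subseteq> sf (sf E)" using sf_ext[OF sf_Fbar[OF E]] .
qed

lemma sf_sf: "star_f D sf E = sf E"
proof -
  have "star_f D sf E = \<Union>{sf F | F. fg_frac D F \<and> F \<subseteq> E}"
    by (simp add: star_f_def[of D sf])
  also have "\<dots> = \<Union>{st F | F. fg_frac D F \<and> F \<subseteq> E}"
    using sf_fg by metis
  finally show ?thesis by (simp add: star_f_def[of D st])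
qed

end

lemma gen_frac:
  fixes A :: "'f::field set"
  assumes A: "is_subring A" and T: "T \<subseteq> A" "1 \<in> T" "0 \<notin> T" "\<And>s t. s \<in> T \<Longrightarrow> t \<in> T \<Longrightarrow> s * t \<in> T"
    and N: "is_submod A N" and S: "S \<subseteq> N"
  shows "gen_mod {a / t | a t. a \<in> A \<and> t \<in> T} S \<subseteq> {n / t | n t. n \<in> N \<and> t \<in> T}"
proof (rule gen_mod_least)
  show "0 \<in> {n / t | n t. n \<in> N \<and> t \<in> T}" using submod_0[OF N] T(2) by force
  show "S \<subseteq> {n / t | n t. n \<in> N \<and> t \<in> T}" using S T(2) by force
  fix x y assume "x \<in> {n / t | n t. n \<in> N \<and> t \<in> T}" "y \<in> {n / t | n t. n \<in> N \<and> t \<in> T}"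
  then obtain n1 t1 n2 t2
    where h: "n1 \<in> N" "t1 \<in> T" "n2 \<in> N" "t2 \<in> T" "x = n1 / t1" "y = n2 / t2" by blast
  have "t1 \<noteq> 0" "t2 \<noteq> 0" using h T(3) by auto
  then have "x + y = (t2 * n1 + t1 * n2) / (t1 * t2)" using h by (simp add: field_simps)
  moreover have "t2 * n1 + t1 * n2 \<in> N"
    using submod_add[OF N submod_mult[OF N _ h(1)] submod_mult[OF N _ h(3)]] h T(1) by blast
  ultimately show "x + y \<in> {n / t | n t. n \<in> N \<and> t \<in> T}" using T(4) h by blast
next
  fix r x assume "r \<in> {a / t | a t. a \<in> A \<and> t \<in> T}" "x \<in> {n / t | n t. n \<in> N \<and> t \<in> T}"
  then obtain a s n t where h: "a \<in> A" "s \<in> T" "n \<in> N" "t \<in> T" "r = a / s" "x = n / t" by blast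
  then have "r * x = (a * n) / (s * t)" "a * n \<in> N" "s * t \<in> T"
    using submod_mult[OF N h(1) h(3)] T(4) by simp_all
  then show "r * x \<in> {n / t | n t. n \<in> N \<and> t \<in> T}" by blast
qed

lemma loc_gen:
  fixes A :: "'f::field set"
  assumes A: "is_subring A" and P: "prime_ideal A P" and E: "is_submod A E"
    and x: "x \<in> gen_mod (localization A P) E"
  shows "\<exists>e\<in>E. \<exists>s\<in>A. s \<notin> P \<and> x = e / s"
proof -
  have L: "localization A P = {a / t | a t. a \<in> A \<and> t \<in> A - P}"
    unfolding localization_def by blast
  have "gen_mod {a / t | a t. a \<in> A \<and> t \<in> A - P} E \<subseteq> {n / t | n t. n \<in> E \<and> t \<in> A - P}"
  proof (rule gen_frac[OF A _ _ _ _ E])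
    show "1 \<in> A - P" using prime_ideal_one[OF P] subring_1[OF A] by blast
    show "0 \<notin> A - P" using prime_ideal_0[OF P] by blast
    show "s * t \<in> A - P" if "s \<in> A - P" "t \<in> A - P" for s t
      using that prime_ideal_mult[OF P] subring_mult[OF A] by blast
  qed auto
  then show ?thesis using x unfolding L by blast
qed

lemma loc_memI:
  fixes A :: "'f::field set"
  assumes A: "is_subring A" and "e \<in> E" "s \<in> A" "s \<notin> P"
  shows "e / s \<in> gen_mod (localization A P) E"
proof -
  have "1 / s \<in> localization A P" unfolding localization_def using assms subring_1[OF A] by blast
  then have "(1 / s) * e \<in> gen_mod (localization A P) E" using gen_mod_mult gen_mod_sub assms(2) by blast
  then show ?thesis by simp
qed

lemma loc_contains: "is_subring (A::'f::field set) \<Longrightarrow> 1 \<notin> P \<Longrightarrow> A \<subseteq> localization A P"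
proof
  fix a assume "is_subring A" "1 \<notin> P" "a \<in> A"
  then have "a = a / 1" "1 \<in> A" by (auto simp: subring_1)
  then show "a \<in> localization A P" unfolding localization_def using \<open>a \<in> A\<close> \<open>1 \<notin> P\<close> by blast
qed

lemma loc_subring:
  fixes A :: "'f::field set"
  assumes A: "is_subring A" and P: "prime_ideal A P"
  shows "is_subring (localization A P)"
  unfolding is_subring_def
proof (intro conjI ballI)
  have AL: "A \<subseteq> localization A P" using loc_contains[OF A prime_ideal_one[OF P]] .
  show "0 \<in> localization A P" "1 \<in> localization A P" using AL subring_0[OF A] subring_1[OF A] by auto
  fix x y assume "x \<in> localization A P" "y \<in> localization A P"
  then obtain a s b t where h: "a \<in> A" "s \<in> A" "s \<notin> P" "b \<in> A" "t \<in> A" "t \<notin> P" "x = a / s" "y = b / t"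
    unfolding localization_def by blast
  have nz: "s \<noteq> 0" "t \<noteq> 0" using h prime_ideal_0[OF P] by auto
  have st: "s * t \<in> A" "s * t \<notin> P" using h prime_ideal_mult[OF P] subring_mult[OF A] by blast+
  have "x + y = (a * t + b * s) / (s * t)" "x - y = (a * t - b * s) / (s * t)"
    using nz h by (simp_all add: field_simps)
  moreover have "x * y = (a * b) / (s * t)" using h by simp
  moreover have "a * t + b * s \<in> A" "a * t - b * s \<in> A" "a * b \<in> A"
    using subring_add[OF A subring_mult[OF A h(1) h(5)] subring_mult[OF A h(4) h(2)]]
      subring_diff[OF A subring_mult[OF A h(1) h(5)] subring_mult[OF A h(4) h(2)]]
      subring_mult[OF A h(1) h(4)] by simp_all
  ultimately show "x + y \<in> localization A P" "x - y \<in> localization A P" "x * y \<in> localization A P"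
    unfolding localization_def using st by blast+
qed

section \<open>Quasi-\<open>\<star>\<close>-maximal ideals and the stable operation \<open>\<star>\<^sup>~\<close>\<close>

lemma quasi_ideal_ideal: "quasi_ideal A st J \<Longrightarrow> is_ideal A J" by (simp add: quasi_ideal_def)

lemma chain_fin:
  assumes "finite T" "C \<in> chains F" "C \<noteq> {}" "T \<subseteq> \<Union>C"
  shows "\<exists>J\<in>C. T \<subseteq> J"
  using assms(1,4)
proof (induction T rule: finite_induct)
  case empty then show ?case using assms(3) by blast
next
  case (insert t T)
  then obtain J J' where "J \<in> C" "T \<subseteq> J" "J' \<in> C" "t \<in> J'" by blast
  then show ?case using chainsD[OF assms(2)] by (metis insert_subset subset_trans)
qed

lemma qmax_quasi: "P \<in> QMax A sf \<Longrightarrow> quasi_ideal A sf P" by (simp add: QMax_def)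
lemma qmax_ne: "P \<in> QMax A sf \<Longrightarrow> P \<noteq> A" by (simp add: QMax_def)
lemma qmax_ideal: "P \<in> QMax A sf \<Longrightarrow> is_ideal A P"
  using qmax_quasi quasi_ideal_ideal by blast
lemma qmax_max: "P \<in> QMax A sf \<Longrightarrow> quasi_ideal A sf Q \<Longrightarrow> Q \<noteq> A \<Longrightarrow> P \<subseteq> Q \<Longrightarrow> Q = P"
  by (simp add: QMax_def)

lemma tilde_mem: "x \<in> tilde A st E \<longleftrightarrow> (\<forall>P \<in> QMax A (star_f A st). x \<in> gen_mod (localization A P) E)"
  unfolding tilde_def by blast

lemma tilde_mono: "E \<subseteq> F \<Longrightarrow> tilde A st E \<subseteq> tilde A st F"
  unfolding subset_iff tilde_mem using gen_mod_mono[of E F] by blast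

lemma tilde_ext: "E \<subseteq> tilde A st E"
  unfolding subset_iff tilde_mem using gen_mod_sub by blast

lemma tilde_idem: "tilde A st (tilde A st E) = tilde A st E"
proof
  show "tilde A st (tilde A st E) \<subseteq> tilde A st E"
  proof
    fix x assume x: "x \<in> tilde A st (tilde A st E)"
    show "x \<in> tilde A st E" unfolding tilde_mem
    proof
      fix P assume P: "P \<in> QMax A (star_f A st)"
      have "tilde A st E \<subseteq> gen_mod (localization A P) E" using P by (auto simp: tilde_mem)
      then have "gen_mod (localization A P) (tilde A st E) \<subseteq> gen_mod (localization A P) E"
        using gen_mod_mono gen_mod_idem by metis
      then show "x \<in> gen_mod (localization A P) E" using x P unfolding tilde_mem by blast
    qed
  qed
qed (rule tilde_ext)

context semistar_domain
begin

lemma quasi_one: "quasi_ideal D sf J \<Longrightarrow> J \<noteq> D \<Longrightarrow> 1 \<notin> sf J"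
  using subring_1[OF sub] ideal_one[OF quasi_ideal_ideal] unfolding quasi_ideal_def by blast

lemma qmax_one: "P \<in> QMax D sf \<Longrightarrow> 1 \<notin> sf P"
  using quasi_one qmax_quasi qmax_ne by blast

lemma quasi_closure:
  assumes I: "is_ideal D I" "I \<noteq> {0}" and one: "1 \<notin> sf I"
  shows "quasi_ideal D sf (sf I \<inter> D)" "sf I \<inter> D \<noteq> D" "I \<subseteq> sf I \<inter> D"
proof -
  have IF: "I \<in> Fbar D" using ideal_Fbar[OF I] .
  show IJ: "I \<subseteq> sf I \<inter> D" using sf_ext[OF IF] ideal_sub[OF I(1)] by blast
  show "sf I \<inter> D \<noteq> D" using one subring_1[OF sub] by blast
  have Jid: "is_ideal D (sf I \<inter> D)"
    unfolding is_ideal_def using submod_Int[OF sf_submod[OF IF] subring_submod[OF sub]] by blast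
  have Jne: "sf I \<inter> D \<noteq> {0}" using IJ I(2) submod_0[OF ideal_submod[OF I(1)]] by blast
  have "sf (sf I \<inter> D) \<subseteq> sf I" using sf_mono[of "sf I \<inter> D" "sf I"] sf_idem[OF IF] by blast
  then have "sf (sf I \<inter> D) \<inter> D = sf I \<inter> D" using sf_ext[OF ideal_Fbar[OF Jid Jne]] by blast
  then show "quasi_ideal D sf (sf I \<inter> D)" unfolding quasi_ideal_def using Jid Jne by blast
qed

text \<open>The union of a nonempty chain of proper quasi-ideals is a proper quasi-ideal,
  because \<open>\<star>\<^sub>f\<close> only looks at finitely generated subideals.\<close>
lemma quasi_chain_union:
  assumes C: "C \<in> chains {J. quasi_ideal D sf J \<and> J \<noteq> D}" "C \<noteq> {}"
  shows "quasi_ideal D sf (\<Union>C)" "\<Union>C \<noteq> D"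
proof -
  have Jq: "\<And>J. J \<in> C \<Longrightarrow> quasi_ideal D sf J \<and> J \<noteq> D" using chainsD2[OF C(1)] by blast
  have sm: "\<And>J. J \<in> C \<Longrightarrow> is_submod D J" and JD: "\<And>J. J \<in> C \<Longrightarrow> J \<subseteq> D"
    using Jq quasi_ideal_ideal ideal_submod ideal_sub by blast+
  have Usub: "is_submod D (\<Union>C)"
    unfolding is_submod_def
  proof (intro conjI ballI)
    show "0 \<in> \<Union>C" using C(2) submod_0[OF sm] by blast
  next
    fix x y assume "x \<in> \<Union>C" "y \<in> \<Union>C"
    then obtain J where "J \<in> C" "{x, y} \<subseteq> J" using chain_fin[OF _ C(1,2), of "{x,y}"] by auto
    then show "x + y \<in> \<Union>C" using submod_add[OF sm] by blast
  next
    fix r x assume "r \<in> D" "x \<in> \<Union>C"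
    then show "r * x \<in> \<Union>C" using submod_mult[OF sm] by blast
  qed
  have Uid: "is_ideal D (\<Union>C)" unfolding is_ideal_def using JD Usub by blast
  obtain J0 where J0: "J0 \<in> C" using C(2) by blast
  have Une: "\<Union>C \<noteq> {0}" using J0 Jq unfolding quasi_ideal_def by blast
  have "sf (\<Union>C) \<inter> D \<subseteq> \<Union>C"
  proof
    fix x assume x: "x \<in> sf (\<Union>C) \<inter> D"
    then have "x \<in> sf (\<Union>C)" by blast
    then obtain F where F: "fg_frac D F" "F \<subseteq> \<Union>C" "x \<in> st F" by (rule sf_memE)
    obtain T where T: "finite T" "F = gen_mod D T" using fg_gens[OF F(1)] by blast
    have "T \<subseteq> \<Union>C" using T F gen_mod_sub by blast
    then obtain J where J: "J \<in> C" "T \<subseteq> J" using chain_fin[OF T(1) C] by blast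
    have "F \<subseteq> J" using T(2) gen_mod_subset_submod[OF sm[OF J(1)] J(2)] by simp
    then have "x \<in> sf J" using sf_memI[OF F(1)] F(3) by blast
    moreover have "sf J \<inter> D = J" using Jq[OF J(1)] unfolding quasi_ideal_def by blast
    ultimately show "x \<in> \<Union>C" using x J(1) by blast
  qed
  then have "sf (\<Union>C) \<inter> D = \<Union>C" using sf_ext[OF ideal_Fbar[OF Uid Une]] ideal_sub[OF Uid] by blast
  then show "quasi_ideal D sf (\<Union>C)" unfolding quasi_ideal_def using Uid Une by simp
  show "\<Union>C \<noteq> D"
  proof
    assume "\<Union>C = D"
    then obtain J where "J \<in> C" "1 \<in> J" using subring_1[OF sub] by blast
    then show False using Jq ideal_one[OF quasi_ideal_ideal] by blast
  qed
qed

lemma zorn_qmax: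
  assumes I: "is_ideal D I" "I \<noteq> {0}" and one: "1 \<notin> sf I"
  shows "\<exists>P\<in>QMax D sf. I \<subseteq> P"
proof -
  define \<F> where "\<F> = {J. quasi_ideal D sf J \<and> J \<noteq> D \<and> I \<subseteq> J}"
  have J0: "sf I \<inter> D \<in> \<F>" using quasi_closure[OF I one] unfolding \<F>_def by blast
  have ub: "\<exists>U\<in>\<F>. \<forall>X\<in>C. X \<subseteq> U" if C: "C \<in> chains \<F>" for C
  proof (cases "C = {}")
    case True then show ?thesis using J0 by blast
  next
    case False
    have CF: "C \<subseteq> \<F>" using chainsD2[OF C] .
    then have "C \<in> chains {J. quasi_ideal D sf J \<and> J \<noteq> D}"
      using C by (auto simp: chains_def \<F>_def)
    note U = quasi_chain_union[OF this False]
    have "I \<subseteq> \<Union>C" using False CF unfolding \<F>_def by blast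
    then have "\<Union>C \<in> \<F>" using U unfolding \<F>_def by simp
    then show ?thesis by blast
  qed
  have "\<exists>M\<in>\<F>. \<forall>X\<in>\<F>. M \<subseteq> X \<longrightarrow> X = M" using ub by (intro Zorn_Lemma2) blast
  then obtain M where M: "M \<in> \<F>" "\<forall>X\<in>\<F>. M \<subseteq> X \<longrightarrow> X = M" by blast
  have "M \<in> QMax D sf" unfolding QMax_def
  proof (intro CollectI conjI allI impI)
    show "quasi_ideal D sf M" "M \<noteq> D" using M(1) unfolding \<F>_def by auto
    fix Q assume "quasi_ideal D sf Q \<and> Q \<noteq> D \<and> M \<subseteq> Q"
    moreover have "I \<subseteq> M" using M(1) unfolding \<F>_def by simp
    ultimately show "Q = M" using M(2) unfolding \<F>_def by blast
  qed
  then show ?thesis using M(1) unfolding \<F>_def by blast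
qed

lemma qmax_prime:
  assumes P: "P \<in> QMax D sf"
  shows "prime_ideal D P"
  unfolding prime_ideal_def
proof (intro conjI ballI impI)
  show PI: "is_ideal D P" using qmax_ideal[OF P] .
  show "P \<noteq> D" using qmax_ne[OF P] .
  have PM: "is_submod D P" using ideal_submod[OF PI] .
  fix a b assume a: "a \<in> D" and b: "b \<in> D" and ab: "a * b \<in> P"
  show "a \<in> P \<or> b \<in> P"
  proof (cases "a \<in> P")
    case aP: False
    have "b \<in> P"
    proof (cases "b = 0")
      case True then show ?thesis using submod_0[OF PM] by simp
    next
      case b0: False
      let ?J = "gen_mod D (insert a P)"
      have Jid: "is_ideal D ?J" unfolding is_ideal_def
        using gen_mod_submod gen_mod_subset_submod[OF subring_submod[OF sub]] ideal_sub[OF PI] a by blast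
      have PJ: "P \<subseteq> ?J" using gen_mod_sub by blast
      have "?J \<noteq> {0}" using PJ qmax_quasi[OF P] submod_0[OF PM] unfolding quasi_ideal_def by blast
      txt \<open>By maximality, \<open>P + aD\<close> has \<open>1\<close> in its \<open>\<star>\<^sub>f\<close>-closure.\<close>
      have "1 \<in> sf ?J"
      proof (rule ccontr)
        assume n1: "1 \<notin> sf ?J"
        note q = quasi_closure[OF Jid \<open>?J \<noteq> {0}\<close> n1]
        have "sf ?J \<inter> D = P" using qmax_max[OF P q(1) q(2)] PJ q(3) by blast
        then show False using q(3) gen_mod_sub aP by blast
      qed
      then obtain F where F: "fg_frac D F" "F \<subseteq> ?J" "1 \<in> st F" by (rule sf_memE)
      txt \<open>Then \<open>bF \<subseteq> P\<close>, so \<open>b \<in> (bF)\<^sup>\<star> \<subseteq> P\<^sup>\<star>\<^sup>f \<inter> D = P\<close>.\<close>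
      have "?J \<subseteq> {x. b * x \<in> P}"
        by (rule gen_mod_least)
           (use ab submod_mult[OF PM b] submod_add[OF PM] submod_0[OF PM] submod_mult[OF PM] in
             \<open>auto simp: mult.commute distrib_left mult.left_commute[of b]\<close>)
      then have bFP: "(*) b ` F \<subseteq> P" using F(2) by blast
      have "b \<in> st ((*) b ` F)" using st_homog[OF b0 fg_Fbar[OF F(1)]] F(3) by (metis image_eqI mult_1_right)
      then have "b \<in> sf P" using sf_memI[OF fg_scale[OF F(1) b0] bFP] by blast
      then show "b \<in> P" using qmax_quasi[OF P] b unfolding quasi_ideal_def by blast
    qed
    then show ?thesis ..
  qed simp
qed

text \<open>\<open>\<star>\<^sup>~ \<le> \<star>\<^sub>f\<close>: an element of \<open>E\<^sup>\<star>\<^sup>~\<close> has a colon ideal not contained in any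
  quasi-\<open>\<star>\<^sub>f\<close>-maximal ideal, hence with \<open>1\<close> in its \<open>\<star>\<^sub>f\<close>-closure.\<close>
lemma tilde_le_sf:
  assumes E: "E \<in> Fbar D"
  shows "tilde D st E \<subseteq> sf E"
proof
  fix x assume x: "x \<in> tilde D st E"
  show "x \<in> sf E"
  proof (cases "x = 0")
    case True then show ?thesis using sf_ext[OF E] submod_0[OF Fbar_submod[OF E]] by blast
  next
    case x0: False
    let ?I = "{a \<in> D. a * x \<in> E}"
    have "1 \<in> sf ?I"
    proof (rule ccontr)
      assume "1 \<notin> sf ?I"
      then obtain P where P: "P \<in> QMax D sf" "?I \<subseteq> P" using zorn_qmax[OF colon_ideal[OF E]] by blast
      have "x \<in> gen_mod (localization D P) E" using x P(1) unfolding tilde_mem by blast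
      then obtain e s where es: "e \<in> E" "s \<in> D" "s \<notin> P" "x = e / s"
        using loc_gen[OF sub qmax_prime[OF P(1)] Fbar_submod[OF E]] by blast
      have "s \<noteq> 0" using es(3) prime_ideal_0[OF qmax_prime[OF P(1)]] by blast
      then have "s \<in> ?I" using es by simp
      then show False using P(2) es(3) by blast
    qed
    then obtain F where F: "fg_frac D F" "F \<subseteq> ?I" "1 \<in> st F" by (rule sf_memE)
    have xF: "(*) x ` F \<subseteq> E" using F(2) by (auto simp: mult.commute)
    have "x \<in> st ((*) x ` F)" using st_homog[OF x0 fg_Fbar[OF F(1)]] F(3) by (metis image_eqI mult_1_right)
    then show "x \<in> sf E" using sf_memI[OF fg_scale[OF F(1) x0] xF] by blast
  qed
qed

text \<open>\<open>\<star> \<le> \<star>\<^sup>~\<close> for stable operations of finite type: by stability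
  \<open>(E :_D x)\<^sup>\<star> = x\<^sup>-\<^sup>1E\<^sup>\<star> \<inter> D\<^sup>\<star>\<close> contains \<open>1\<close> when \<open>x \<in> E\<^sup>\<star>\<close>, so the colon ideal
  avoids every quasi-\<open>\<star>\<^sub>f\<close>-maximal ideal.\<close>
lemma stable_le_tilde:
  assumes stab: "stable D st" and ft: "finite_type D st" and E: "E \<in> Fbar D"
  shows "st E \<subseteq> tilde D st E"
proof
  fix x assume x: "x \<in> st E"
  show "x \<in> tilde D st E" unfolding tilde_mem
  proof
    fix P assume P: "P \<in> QMax D sf"
    show "x \<in> gen_mod (localization D P) E"
    proof (cases "x = 0")
      case True then show ?thesis using gen_mod_0 by simp
    next
      case x0: False
      let ?I = "{a \<in> D. a * x \<in> E}"
      have ix: "inverse x \<noteq> 0" using x0 by simp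
      have "?I = (*) (inverse x) ` E \<inter> D"
        using x0 by (auto simp: image_iff field_simps)
      then have "st ?I = st ((*) (inverse x) ` E) \<inter> st D"
        using stab Fbar_scale[OF E ix] subring_Fbar unfolding stable_def by metis
      also have "\<dots> = (*) (inverse x) ` st E \<inter> st D" using st_homog[OF ix E] by simp
      finally have "1 \<in> st ?I"
        using x x0 st_ext[OF subring_Fbar] subring_1[OF sub] by (force simp: image_iff)
      then have "1 \<in> sf ?I" using ft ideal_Fbar[OF colon_ideal[OF E]] unfolding finite_type_def by blast
      then have "\<not> ?I \<subseteq> P" using sf_mono qmax_one[OF P] by blast
      then obtain a where a: "a \<in> D" "a * x \<in> E" "a \<notin> P" by blast
      have "a \<noteq> 0" using a(3) prime_ideal_0[OF qmax_prime[OF P]] by blast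
      then have "x = (a * x) / a" by simp
      then show ?thesis using loc_memI[OF sub a(2) a(1) a(3)] by simp
    qed
  qed
qed

lemma stable_tilde_eq:
  assumes "stable D st" "finite_type D st"
  shows "eq_on_Fbar D (tilde D st) st"
  unfolding eq_on_Fbar_def
  using tilde_le_sf stable_le_tilde[OF assms] assms(2) unfolding finite_type_def by blast

end

section \<open>The set \<open>\<Delta>\<^sub>1\<^sup>\<star>\<close> depends only on \<open>\<star>\<^sub>f\<close>-closures of \<open>1\<close>\<close>

text \<open>For a closure-like map \<open>t\<close> the defining condition \<open>P\<^sup>t\<^sup>f \<subset> D\<^sup>t\<close> of \<open>\<Delta>\<^sub>1\<close> just says
  \<open>1 \<notin> P\<^sup>t\<^sup>f\<close>.\<close>
lemma sf_proper_iff_gen: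
  fixes t :: "'f::field set \<Rightarrow> 'f set"
  assumes PD: "P \<subseteq> D" and mono: "\<And>F. fg_frac D F \<Longrightarrow> F \<subseteq> D \<Longrightarrow> t F \<subseteq> t D"
    and one: "1 \<in> t D" and up: "\<And>F. fg_frac D F \<Longrightarrow> 1 \<in> t F \<Longrightarrow> t D \<subseteq> t F"
  shows "star_f D t P \<subset> t D \<longleftrightarrow> 1 \<notin> star_f D t P"
proof
  assume lt: "star_f D t P \<subset> t D"
  show "1 \<notin> star_f D t P"
  proof
    assume "1 \<in> star_f D t P"
    then obtain F where F: "fg_frac D F" "F \<subseteq> P" "1 \<in> t F" by (rule sf_memE)
    then have "t D \<subseteq> star_f D t P" using up[OF F(1) F(3)] sf_memI[OF F(1) F(2)] by blast
    then show False using lt by blast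
  qed
next
  assume n1: "1 \<notin> star_f D t P"
  have "star_f D t P \<subseteq> t D" using mono PD unfolding star_f_def by blast
  then show "star_f D t P \<subset> t D" using n1 one by blast
qed

lemma Delta_cong:
  assumes "\<And>P. P \<subseteq> D \<Longrightarrow> (star_f D s1 P \<subset> s1 D \<longleftrightarrow> star_f D s2 P \<subset> s2 D)"
  shows "Delta1 D s1 = Delta1 D s2"
  unfolding Delta1_def using assms[of "contr D _"] by (simp add: contr_def)

lemma bracket_cong: "Delta1 D s1 = Delta1 D s2 \<Longrightarrow> bracket D s1 = bracket D s2"
  unfolding bracket_def[abs_def] locS1_def S1_def by simp

context semistar_domain
begin

lemma sf_proper_iff: "P \<subseteq> D \<Longrightarrow> sf P \<subset> st D \<longleftrightarrow> 1 \<notin> sf P"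
proof (rule sf_proper_iff_gen)
  show "1 \<in> st D" using st_ext[OF subring_Fbar] subring_1[OF sub] by blast
  fix F assume F: "fg_frac D F"
  show "F \<subseteq> D \<Longrightarrow> st F \<subseteq> st D" using st_mono[OF fg_Fbar[OF F] subring_Fbar] by blast
  assume "1 \<in> st F"
  then have "D \<subseteq> st F" using submod_mult[OF st_submod[OF fg_Fbar[OF F]]] by (metis mult_1_right subsetI)
  then show "st D \<subseteq> st F" using st_mono[OF subring_Fbar st_Fbar[OF fg_Fbar[OF F]]] st_idem[OF fg_Fbar[OF F]]
    by blast
qed

text \<open>For \<open>P \<subseteq> D\<close>, \<open>1 \<in> P\<^sup>\<star>\<^sup>~\<^sup>f\<close> iff \<open>1 \<in> P\<^sup>\<star>\<^sup>f\<close>: one direction is \<open>\<star>\<^sup>~ \<le> \<star>\<^sub>f\<close>; for the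
  other, a finitely generated \<open>F \<subseteq> P\<close> with \<open>1 \<in> F\<^sup>\<star>\<close> avoids every quasi-\<open>\<star>\<^sub>f\<close>-maximal ideal.\<close>
lemma one_tilde_iff:
  assumes PD: "P \<subseteq> D"
  shows "1 \<in> star_f D (tilde D st) P \<longleftrightarrow> 1 \<in> sf P"
proof
  assume "1 \<in> star_f D (tilde D st) P"
  then obtain F where F: "fg_frac D F" "F \<subseteq> P" "1 \<in> tilde D st F" by (rule sf_memE)
  then show "1 \<in> sf P" using tilde_le_sf[OF fg_Fbar[OF F(1)]] sf_mono[OF F(2)] by blast
next
  assume "1 \<in> sf P"
  then obtain F where F: "fg_frac D F" "F \<subseteq> P" "1 \<in> st F" by (rule sf_memE)
  have "1 \<in> gen_mod (localization D M) F" if M: "M \<in> QMax D sf" for M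
  proof -
    have "\<not> F \<subseteq> M" using sf_memI[OF F(1), of M] F(3) qmax_one[OF M] by blast
    then obtain a where a: "a \<in> F" "a \<notin> M" by blast
    have "a \<noteq> 0" using a(2) prime_ideal_0[OF qmax_prime[OF M]] by blast
    then show ?thesis using loc_memI[OF sub a(1) _ a(2)] a(1) F(2) PD by force
  qed
  then have "1 \<in> tilde D st F" unfolding tilde_mem by blast
  then show "1 \<in> star_f D (tilde D st) P" using sf_memI[OF F(1) F(2)] by blast
qed

text \<open>\<dots> and to \<open>\<star>\<^sup>~\<close>: if \<open>1 \<in> F\<^sup>\<star>\<^sup>~\<close> then \<open>D \<subseteq> F\<^sup>\<star>\<^sup>~\<close>, since every \<open>F D\<^sub>M\<close> is a
  \<open>D\<^sub>M\<close>-module.\<close>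
lemma tilde_proper_iff: "P \<subseteq> D \<Longrightarrow> star_f D (tilde D st) P \<subset> tilde D st D \<longleftrightarrow> 1 \<notin> sf P"
  unfolding one_tilde_iff[symmetric]
proof (rule sf_proper_iff_gen)
  show "1 \<in> tilde D st D" using tilde_ext subring_1[OF sub] by blast
  fix F assume F: "fg_frac D F"
  show "F \<subseteq> D \<Longrightarrow> tilde D st F \<subseteq> tilde D st D" using tilde_mono by blast
  assume one: "1 \<in> tilde D st F"
  have "a \<in> tilde D st F" if a: "a \<in> D" for a
    unfolding tilde_mem
  proof
    fix M assume M: "M \<in> QMax D sf"
    have "1 \<in> gen_mod (localization D M) F" using one M unfolding tilde_mem by blast
    moreover have "a \<in> localization D M"
      using loc_contains[OF sub prime_ideal_one[OF qmax_prime[OF M]]] a by blast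
    ultimately show "a \<in> gen_mod (localization D M) F" using gen_mod_mult by fastforce
  qed
  then have "tilde D st D \<subseteq> tilde D st (tilde D st F)" using tilde_mono by blast
  then show "tilde D st D \<subseteq> tilde D st F" using tilde_idem by blast
qed

text \<open>Part (b) of the theorem at the level of \<open>\<Delta>\<^sub>1\<close>.\<close>
lemma Delta_tilde: "Delta1 D (tilde D st) = Delta1 D st"
  by (rule Delta_cong) (simp add: tilde_proper_iff sf_proper_iff)

lemma Delta_sf: "Delta1 D sf = Delta1 D st"
  by (rule Delta_cong) (simp add: sf_proper_iff sf_sf sf_fg[OF fg_whole])

end

section \<open>Polynomials with coefficients in a subset\<close>

lemma DX_I: "(\<And>i. coeff p i \<in> I) \<Longrightarrow> p \<in> DX I" by (simp add: DX_def)
lemma DX_D: "p \<in> DX I \<Longrightarrow> coeff p i \<in> I" by (simp add: DX_def)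
lemma DX_Int: "DX (E \<inter> F) = DX E \<inter> DX F" by (auto simp: DX_def)
lemma DX_mono: "E \<subseteq> F \<Longrightarrow> DX E \<subseteq> DX F" by (auto simp: DX_def)
lemma DX_const: "c \<in> I \<Longrightarrow> 0 \<in> I \<Longrightarrow> [:c:] \<in> DX I"
  by (rule DX_I) (auto simp: coeff_pCons split: nat.split)
lemma DX_monom: "c \<in> I \<Longrightarrow> 0 \<in> I \<Longrightarrow> monom c n \<in> DX I"
  by (rule DX_I) auto
lemma polyY_DX: "polyY Q = DX (to_fract ` Q)" by (simp add: polyY_def DX_def)

lemma DX_mult_submod:
  assumes M: "is_submod R M" and p: "p \<in> DX M" and q: "q \<in> DX R"
  shows "q * p \<in> DX M" "p * q \<in> DX M"
proof -
  show "q * p \<in> DX M"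
  proof (rule DX_I)
    fix n
    show "coeff (q * p) n \<in> M"
      unfolding coeff_mult by (rule submod_sum[OF _ M]) (use M p q DX_D submod_mult in blast)+
  qed
  then show "p * q \<in> DX M" by (simp add: mult.commute)
qed

lemma DX_submod:
  assumes M: "is_submod R M"
  shows "is_submod (DX R) (DX M)"
  unfolding is_submod_def
proof (intro conjI ballI)
  show "0 \<in> DX M" using submod_0[OF M] by (auto intro: DX_I)
  show "x + y \<in> DX M" if "x \<in> DX M" "y \<in> DX M" for x y
    using that submod_add[OF M] by (auto simp: DX_def)
  show "r * x \<in> DX M" if "r \<in> DX R" "x \<in> DX M" for r x
    using DX_mult_submod(1)[OF M that(2,1)] .
qed

lemma DX_subring:
  assumes R: "is_subring R"
  shows "is_subring (DX R)"
  unfolding is_subring_def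
proof (intro conjI ballI)
  show "0 \<in> DX R" "1 \<in> DX R" using subring_0[OF R] subring_1[OF R] by (auto intro!: DX_I)
  fix x y assume x: "x \<in> DX R" and y: "y \<in> DX R"
  show "x + y \<in> DX R" "x - y \<in> DX R" using x y subring_add[OF R] subring_diff[OF R] by (auto simp: DX_def)
  show "x * y \<in> DX R" using DX_mult_submod(1)[OF subring_submod[OF R] y x] .
qed

text \<open>Extension of a prime ideal \<open>P\<close> of \<open>R\<close> to \<open>R[X]\<close> stays prime: compare the product's
  coefficient at the sum of the first indices where the factors leave \<open>P[X]\<close>.\<close>
lemma DX_prime:
  assumes R: "is_subring R" and P: "prime_ideal R P"
  shows "prime_ideal (DX R) (DX P)"
  unfolding prime_ideal_def
proof (intro conjI ballI impI)
  have PI: "is_ideal R P" using prime_ideal_ideal[OF P] .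
  have PM: "is_submod R P" using ideal_submod[OF PI] .
  show "is_ideal (DX R) (DX P)" unfolding is_ideal_def
    using DX_mono[OF ideal_sub[OF PI]] DX_submod[OF PM] by blast
  show "DX P \<noteq> DX R" using prime_ideal_one[OF P] DX_subring[OF R] subring_1 DX_D[of 1 P 0] by fastforce
  fix f g assume f: "f \<in> DX R" and g: "g \<in> DX R" and fg: "f * g \<in> DX P"
  show "f \<in> DX P \<or> g \<in> DX P"
  proof (rule ccontr)
    assume "\<not> (f \<in> DX P \<or> g \<in> DX P)"
    then have ex: "\<exists>i. coeff f i \<notin> P" "\<exists>j. coeff g j \<notin> P" by (auto simp: DX_def)
    define i where "i = (LEAST i. coeff f i \<notin> P)"
    define j where "j = (LEAST j. coeff g j \<notin> P)"
    have fi: "coeff f i \<notin> P" and fl: "\<And>k. k < i \<Longrightarrow> coeff f k \<in> P"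
      unfolding i_def using LeastI_ex[OF ex(1)] not_less_Least by blast+
    have gj: "coeff g j \<notin> P" and gl: "\<And>k. k < j \<Longrightarrow> coeff g k \<in> P"
      unfolding j_def using LeastI_ex[OF ex(2)] not_less_Least by blast+
    let ?t = "\<lambda>k. coeff f k * coeff g (i + j - k)"
    have c: "coeff (f * g) (i + j) = ?t i + (\<Sum>k\<in>{..i+j} - {i}. ?t k)"
      by (simp add: coeff_mult sum.remove[of "{..i+j}" i])
    have rest: "(\<Sum>k\<in>{..i+j} - {i}. ?t k) \<in> P"
    proof (rule submod_sum[OF _ PM])
      fix k assume k: "k \<in> {..i+j} - {i}"
      show "?t k \<in> P"
      proof (cases "k < i")
        case True
        then show ?thesis using submod_mult[OF PM DX_D[OF g] fl] by (simp add: mult.commute)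
      next
        case False
        then have "i + j - k < j" using k by auto
        then show ?thesis using submod_mult[OF PM DX_D[OF f] gl] by simp
      qed
    qed simp
    have "?t i = coeff (f * g) (i + j) - (\<Sum>k\<in>{..i+j} - {i}. ?t k)" using c by simp
    then have "?t i \<in> P" using submod_diff[OF R PM DX_D[OF fg] rest] by simp
    then show False using prime_ideal_mult[OF P DX_D[OF f] DX_D[OF g]] fi gj by auto
  qed
qed

text \<open>The inductive step of \<open>unit_coeff_cancel\<close>: if \<open>c p\<^sub>i \<in> R\<close> for all \<open>i > n\<close> then also
  \<open>c p\<^sub>n \<in> R\<close>, provided the statement is known for the index \<open>n\<close>. Otherwise choose the largest
  \<open>r\<close> with \<open>g\<^sub>r c p\<^sub>n \<notin> R\<close>; the \<open>(n+r)\<close>-th coefficient of \<open>c p g\<close> then shows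
  \<open>g\<^sub>r c p\<^sub>n \<in> R\<close>.\<close>
lemma unit_coeff_cancel_step:
  fixes p g :: "'a::field poly"
  assumes R: "is_subring R" and g: "g \<in> DX R" and pg: "p * g \<in> DX R"
    and gk: "coeff g k \<noteq> 0" "inverse (coeff g k) \<in> R"
    and IH: "\<And>c. c \<in> R \<Longrightarrow> \<forall>i\<ge>n. c * coeff p i \<in> R \<Longrightarrow> \<forall>i. c * coeff p i \<in> R"
    and c: "c \<in> R" and hi: "\<forall>i\<ge>Suc n. c * coeff p i \<in> R"
  shows "c * coeff p n \<in> R"
proof (rule ccontr)
  assume cn: "c * coeff p n \<notin> R"
  have gR: "\<And>j. coeff g j \<in> R" using g DX_D by blast
  txt \<open>Whenever \<open>g\<^sub>j c p\<^sub>n \<in> R\<close>, the hypothesis at \<open>n\<close> applies to \<open>g\<^sub>j c\<close>.\<close>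
  have good: "coeff g j * c * coeff p i \<in> R" if gjn: "coeff g j * c * coeff p n \<in> R" for i j
  proof -
    have "coeff g j * c * coeff p i \<in> R" if "i \<ge> n" for i
    proof (cases "i = n")
      case False
      then have "c * coeff p i \<in> R" using hi that by simp
      then show ?thesis using subring_mult[OF R gR] by (simp add: mult.assoc)
    qed (use gjn in simp)
    then show ?thesis using IH[OF subring_mult[OF R gR c]] by blast
  qed
  define J where "J = {j. coeff g j * c * coeff p n \<notin> R}"
  have "J \<subseteq> {..degree g}"
  proof
    fix j assume "j \<in> J"
    then have "coeff g j \<noteq> 0" using subring_0[OF R] unfolding J_def by auto
    then show "j \<in> {..degree g}" using le_degree by auto
  qed
  then have Jfin: "finite J" by (rule finite_subset) simp
  have "k \<in> J"
  proof (rule ccontr)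
    assume "k \<notin> J"
    then have "inverse (coeff g k) * (coeff g k * c * coeff p n) \<in> R"
      using subring_mult[OF R gk(2)] unfolding J_def by blast
    then show False using gk(1) cn by (simp add: field_simps)
  qed
  define r where "r = Max J"
  have rJ: "r \<in> J" unfolding r_def using Max_in[OF Jfin] \<open>k \<in> J\<close> by blast
  have above: "\<And>j. j > r \<Longrightarrow> j \<notin> J" unfolding r_def using Max_ge[OF Jfin] by fastforce
  let ?t = "\<lambda>a. c * (coeff p a * coeff g (n + r - a))"
  have "c * coeff (p * g) (n + r) = ?t n + (\<Sum>a\<in>{..n+r} - {n}. ?t a)"
    by (simp add: coeff_mult sum.remove[of "{..n+r}" n] distrib_left sum_distrib_left)
  then have tn: "?t n = c * coeff (p * g) (n + r) - (\<Sum>a\<in>{..n+r} - {n}. ?t a)" by simp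
  have "(\<Sum>a\<in>{..n+r} - {n}. ?t a) \<in> R"
  proof (rule subring_sum[OF _ R])
    fix a assume a: "a \<in> {..n+r} - {n}"
    show "?t a \<in> R"
    proof (cases "a < n")
      case True
      then have "n + r - a \<notin> J" using above by simp
      then show ?thesis using good[of "n + r - a" a] unfolding J_def by (simp add: ac_simps)
    next
      case False
      then have "c * coeff p a \<in> R" using hi a by auto
      then show ?thesis using subring_mult[OF R _ gR] by (metis mult.assoc)
    qed
  qed simp
  then have "?t n \<in> R" unfolding tn using subring_diff[OF R subring_mult[OF R c DX_D[OF pg]]] by blast
  then show False using rJ unfolding J_def by (simp add: ac_simps)
qed

text \<open>By downward induction, \<open>c p\<^sub>i \<in> R\<close> for all \<open>i\<close> whenever this holds for
  all \<open>i \<ge> n\<close>; take \<open>c = 1\<close> and \<open>n\<close> beyond the degree of \<open>p\<close>.\<close>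
lemma unit_coeff_cancel:
  fixes p g :: "'a::field poly"
  assumes R: "is_subring R" and g: "g \<in> DX R" and pg: "p * g \<in> DX R"
    and gk: "coeff g k \<noteq> 0" "inverse (coeff g k) \<in> R"
  shows "p \<in> DX R"
proof -
  have "\<forall>c\<in>R. (\<forall>i\<ge>n. c * coeff p i \<in> R) \<longrightarrow> (\<forall>i. c * coeff p i \<in> R)" for n
  proof (induction n)
    case (Suc n)
    show ?case
    proof (intro ballI impI)
      fix c assume c: "c \<in> R" and hi: "\<forall>i\<ge>Suc n. c * coeff p i \<in> R"
      have "c * coeff p n \<in> R"
        using unit_coeff_cancel_step[OF R g pg gk _ c hi] Suc.IH by blast
      then have "\<forall>i\<ge>n. c * coeff p i \<in> R" using hi by (metis le_antisym not_less_eq_eq)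
      then show "\<forall>i. c * coeff p i \<in> R" using Suc.IH c by blast
    qed
  qed simp
  moreover have "\<forall>i\<ge>Suc (degree p). 1 * coeff p i \<in> R"
    using subring_0[OF R] by (simp add: coeff_eq_0)
  ultimately have "\<forall>i. 1 * coeff p i \<in> R" using subring_1[OF R] by blast
  then show ?thesis by (simp add: DX_def)
qed

lemma to_fract_add: "to_fract (a + b) = to_fract a + to_fract b" by (simp add: to_fract_def)
lemma to_fract_mult: "to_fract (a * b) = to_fract a * to_fract b" by (simp add: to_fract_def)
lemma to_fract_diff: "to_fract (a - b) = to_fract a - to_fract b" by (simp add: to_fract_def)
lemma to_fract_0: "to_fract 0 = 0" by (simp add: to_fract_def Zero_fract_def)
lemma to_fract_1: "to_fract 1 = 1" by (simp add: to_fract_def One_fract_def)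
lemma to_fract_inj: "to_fract a = to_fract b \<longleftrightarrow> a = b" by (simp add: to_fract_def eq_fract)
lemma to_fract_eq0: "to_fract a = 0 \<longleftrightarrow> a = 0" using to_fract_inj[of a 0] to_fract_0 by metis
lemma to_fract_sum: "to_fract (sum f I) = (\<Sum>i\<in>I. to_fract (f i))"
  by (induction I rule: infinite_finite_induct) (auto simp: to_fract_0 to_fract_add)

lemma fract_repr: obtains a b where "b \<noteq> 0" "x = to_fract a / to_fract b"
  by (cases x) (simp add: to_fract_def)

lemma to_fract_subring: "is_subring R \<Longrightarrow> is_subring (to_fract ` R)"
  unfolding is_subring_def
  by (auto simp: to_fract_0[symmetric] to_fract_1[symmetric] to_fract_add[symmetric]
      to_fract_diff[symmetric] to_fract_mult[symmetric])

lemma to_fract_submod: "is_submod R M \<Longrightarrow> is_submod (to_fract ` R) (to_fract ` M)"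
  unfolding is_submod_def
  by (auto simp: to_fract_0[symmetric] to_fract_add[symmetric] to_fract_mult[symmetric])

lemma to_fract_prime:
  assumes P: "prime_ideal R P"
  shows "prime_ideal (to_fract ` R) (to_fract ` P)"
  unfolding prime_ideal_def
proof (intro conjI ballI impI)
  have PI: "is_ideal R P" using prime_ideal_ideal[OF P] .
  show "is_ideal (to_fract ` R) (to_fract ` P)"
    unfolding is_ideal_def using to_fract_submod[OF ideal_submod[OF PI]] ideal_sub[OF PI] by blast
  have "inj to_fract" by (simp add: inj_def to_fract_inj)
  then show "to_fract ` P \<noteq> to_fract ` R" using P inj_image_eq_iff unfolding prime_ideal_def by metis
  fix a b assume "a \<in> to_fract ` R" "b \<in> to_fract ` R" "a * b \<in> to_fract ` P"
  then obtain x y where "x \<in> R" "y \<in> R" "x * y \<in> P" "a = to_fract x" "b = to_fract y"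
    by (auto simp: to_fract_mult[symmetric] to_fract_inj)
  then show "a \<in> to_fract ` P \<or> b \<in> to_fract ` P" using prime_ideal_mult[OF P] by blast
qed

lemma embY_add: "embY (a + b) = embY a + embY b"
  by (simp add: embY_def to_fract_add[symmetric])
lemma embY_mult: "embY (a * b) = embY a * embY b"
  unfolding embY_def by (simp add: mult.commute flip: to_fract_mult)
lemma embY_0: "embY 0 = 0" by (simp add: embY_def to_fract_0)
lemma embY_inj: "embY a = embY b \<longleftrightarrow> a = b" by (simp add: embY_def to_fract_inj)
lemma embY_nz: "a \<noteq> 0 \<Longrightarrow> embY a \<noteq> 0" using embY_inj embY_0 by metis
lemma embY_div: "b \<noteq> 0 \<Longrightarrow> embY (a / b) = embY a / embY b"
  using embY_mult[of "a / b" b] embY_nz[of b] by (simp add: field_simps)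

section \<open>The operation \<open>[\<star>]\<close> on \<open>D[X]\<close>\<close>

context frac_domain
begin

lemma D1_subring: "is_subring (DX D)" using DX_subring[OF sub] .

lemma A1_subring: "is_subring (A1 D)" using to_fract_subring[OF D1_subring] by (simp add: A1_def)

text \<open>\<open>K(X)\<close> is the quotient field of \<open>D[X]\<close>: clear the denominators of the coefficients of
  numerator and denominator.\<close>
lemma clear_denom: "\<exists>d\<in>D. d \<noteq> 0 \<and> smult d p \<in> DX D"
proof -
  obtain d where d: "d \<in> D" "d \<noteq> 0" "\<forall>s\<in>coeff p ` {..degree p}. d * s \<in> D"
    using fin_denom[of "coeff p ` {..degree p}"] by blast
  have "coeff (smult d p) i \<in> D" for i
    using d(3) subring_0[OF sub] by (cases "i \<le> degree p") (auto simp: coeff_eq_0)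
  then show ?thesis using d by (blast intro: DX_I)
qed

lemma A1_qf: "quot_field_of (A1 D)"
  unfolding quot_field_of_def
proof
  fix x :: "'f poly fract"
  obtain a b where ab: "b \<noteq> 0" "x = to_fract a / to_fract b" using fract_repr by blast
  obtain d1 where d1: "d1 \<in> D" "d1 \<noteq> 0" "smult d1 a \<in> DX D" using clear_denom by blast
  obtain d2 where d2: "d2 \<in> D" "d2 \<noteq> 0" "smult d2 b \<in> DX D" using clear_denom by blast
  let ?c = "[:d1 * d2:]"
  have "?c * a = [:d2:] * smult d1 a" "?c * b = [:d1:] * smult d2 b" by (simp_all add: ac_simps)
  then have num: "?c * a \<in> DX D" and den: "?c * b \<in> DX D"
    using DX_mult_submod(1)[OF subring_submod[OF sub] _ DX_const[OF _ subring_0[OF sub]]] d1 d2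
    by metis+
  have "to_fract ?c \<noteq> 0" using d1(2) d2(2) by (simp add: to_fract_eq0)
  then have "to_fract (?c * a) / to_fract (?c * b) = to_fract a / to_fract b"
    unfolding to_fract_mult by (rule mult_divide_mult_cancel_left)
  then have "x = to_fract (?c * a) / to_fract (?c * b)" using ab by simp
  moreover have "to_fract (?c * b) \<noteq> 0" using ab(1) d1(2) d2(2) by (simp add: to_fract_eq0)
  ultimately show "\<exists>a\<in>A1 D. \<exists>b\<in>A1 D. b \<noteq> 0 \<and> x = a / b" using num den unfolding A1_def by blast
qed

lemma polyY_D1: "polyY (DX D) = DX (A1 D)" by (simp add: polyY_DX A1_def)

lemma polyY_prime: "Q \<in> Delta1 D st \<Longrightarrow> prime_ideal (polyY (DX D)) (polyY Q)"
  unfolding polyY_DX Delta1_def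
  using DX_prime[OF to_fract_subring[OF D1_subring] to_fract_prime] by blast

lemma zero_Delta: "{0} \<in> Delta1 D st"
proof -
  have "prime_ideal (DX D) {0}"
    using subring_0[OF D1_subring] subring_1[OF D1_subring]
    unfolding prime_ideal_def is_ideal_def is_submod_def by (auto dest: sym)
  moreover have "contr D {0} = {0}" using subring_0[OF sub] by (auto simp: contr_def)
  ultimately show ?thesis by (simp add: Delta1_def)
qed

lemma S1_sub: "S1 D st \<subseteq> DX (A1 D)" by (auto simp: S1_def polyY_D1)

lemma S1_1: "1 \<in> S1 D st"
proof -
  have "1 \<notin> polyY Q" if "Q \<in> Delta1 D st" for Q using prime_ideal_one[OF polyY_prime[OF that]] .
  then show ?thesis using subring_1[OF DX_subring[OF A1_subring]] unfolding S1_def polyY_D1 by blast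
qed

lemma S1_0: "0 \<notin> S1 D st"
proof -
  have "0 \<in> polyY {0}" by (simp add: polyY_def to_fract_0)
  then show ?thesis unfolding S1_def using zero_Delta by blast
qed

lemma S1_mult:
  assumes s: "s \<in> S1 D st" and t: "t \<in> S1 D st"
  shows "s * t \<in> S1 D st"
proof -
  have st: "s \<in> polyY (DX D)" "t \<in> polyY (DX D)" using s t by (auto simp: S1_def)
  have "s * t \<notin> polyY Q" if Q: "Q \<in> Delta1 D st" for Q
    using prime_ideal_mult[OF polyY_prime[OF Q] st] s t Q unfolding S1_def by blast
  moreover have "s * t \<in> polyY (DX D)" using subring_mult[OF DX_subring[OF A1_subring]] st
    unfolding polyY_D1 by blast
  ultimately show ?thesis unfolding S1_def by blast
qed

lemma to_fract_S1_nz: "s \<in> S1 D st \<Longrightarrow> to_fract s \<noteq> 0"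
  using S1_0 to_fract_eq0 by metis

lemma locS1_eq: "locS1 D st = {a / t | a t. a \<in> to_fract ` DX (A1 D) \<and> t \<in> to_fract ` S1 D st}"
  unfolding locS1_def polyY_D1 by blast

lemma embY_A1:
  assumes r: "r \<in> A1 D"
  shows "embY r \<in> locS1 D st"
proof -
  have "embY r = to_fract [:r:] / to_fract 1" by (simp add: embY_def to_fract_1)
  then show ?thesis using DX_const[OF r subring_0[OF A1_subring]] S1_1 unfolding locS1_eq by blast
qed

lemma bracketD:
  assumes E: "is_submod (A1 D) E" and u: "u \<in> bracket D st E"
  shows "\<exists>s\<in>S1 D st. [:u:] * s \<in> DX E"
proof -
  have "gen_mod {a / t | a t. a \<in> to_fract ` DX (A1 D) \<and> t \<in> to_fract ` S1 D st} (embY ` E)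
     \<subseteq> {n / t | n t. n \<in> to_fract ` DX E \<and> t \<in> to_fract ` S1 D st}"
  proof (rule gen_frac)
    show "is_subring (to_fract ` DX (A1 D))" using to_fract_subring[OF DX_subring[OF A1_subring]] .
    show "to_fract ` S1 D st \<subseteq> to_fract ` DX (A1 D)" using S1_sub by blast
    show "1 \<in> to_fract ` S1 D st" using S1_1 to_fract_1 by (metis image_eqI)
    show "0 \<notin> to_fract ` S1 D st" using to_fract_S1_nz by (metis imageE)
    show "s * t \<in> to_fract ` S1 D st" if "s \<in> to_fract ` S1 D st" "t \<in> to_fract ` S1 D st" for s t
      using that S1_mult by (auto simp flip: to_fract_mult)
    show "is_submod (to_fract ` DX (A1 D)) (to_fract ` DX E)" using to_fract_submod[OF DX_submod[OF E]] .
    show "embY ` E \<subseteq> to_fract ` DX E" unfolding embY_def using DX_const submod_0[OF E] by blast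
  qed
  then obtain h s where hs: "h \<in> DX E" "s \<in> S1 D st" "embY u = to_fract h / to_fract s"
    using u unfolding bracket_def locS1_eq by blast
  then have "to_fract [:u:] * to_fract s = to_fract h"
    using to_fract_S1_nz[OF hs(2)] unfolding embY_def by (simp add: field_simps)
  then have "to_fract ([:u:] * s) = to_fract h" by (simp only: to_fract_mult)
  then show ?thesis using hs to_fract_inj by metis
qed

text \<open>Conversely \<open>u = (u s)/s\<close> with \<open>u s = \<Sum> e\<^sub>i Y\<^sup>i\<close> lies in \<open>E[Y]\<^sub>S\<close>.\<close>
lemma bracketI:
  assumes s: "s \<in> S1 D st" "[:u:] * s \<in> DX E"
  shows "u \<in> bracket D st E"
proof -
  define h where "h = [:u:] * s"
  have "embY u = to_fract h / to_fract s"
    using to_fract_S1_nz[OF s(1)] unfolding h_def embY_def to_fract_mult by simp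
  also have "\<dots> = to_fract (\<Sum>i\<le>degree h. monom 1 i * [:coeff h i:]) / to_fract s"
    by (simp add: smult_monom poly_as_sum_of_monoms)
  also have "\<dots> = (\<Sum>i\<le>degree h. (to_fract (monom 1 i) / to_fract s) * embY (coeff h i))"
    unfolding to_fract_sum to_fract_mult embY_def by (simp add: sum_divide_distrib)
  also have "\<dots> \<in> gen_mod (locS1 D st) (embY ` E)"
  proof (rule gen_mod_sum)
    fix i
    have "monom 1 i \<in> DX (A1 D)" using DX_monom subring_0[OF A1_subring] subring_1[OF A1_subring] by blast
    then have "to_fract (monom 1 i) / to_fract s \<in> locS1 D st" using s(1) unfolding locS1_eq by blast
    moreover have "embY (coeff h i) \<in> gen_mod (locS1 D st) (embY ` E)"
      using DX_D[OF s(2)] gen_mod_sub unfolding h_def by blast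
    ultimately show "to_fract (monom 1 i) / to_fract s * embY (coeff h i) \<in> gen_mod (locS1 D st) (embY ` E)"
      by (rule gen_mod_mult)
  qed simp
  finally show ?thesis by (simp add: bracket_def)
qed

lemma bracket_char:
  "is_submod (A1 D) E \<Longrightarrow> u \<in> bracket D st E \<longleftrightarrow> (\<exists>s\<in>S1 D st. [:u:] * s \<in> DX E)"
  using bracketD bracketI by blast

lemma br_ext: "E \<subseteq> bracket D st E"
  unfolding bracket_def using gen_mod_sub by blast

lemma br_mono: "E \<subseteq> F \<Longrightarrow> bracket D st E \<subseteq> bracket D st F"
  unfolding bracket_def using gen_mod_mono[of "embY ` E" "embY ` F"] by blast

lemma br_idem: "bracket D st (bracket D st E) = bracket D st E"
proof
  have "embY ` bracket D st E \<subseteq> gen_mod (locS1 D st) (embY ` E)" unfolding bracket_def by blast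
  then have "gen_mod (locS1 D st) (embY ` bracket D st E) \<subseteq> gen_mod (locS1 D st) (embY ` E)"
    using gen_mod_mono gen_mod_idem by metis
  then show "bracket D st (bracket D st E) \<subseteq> bracket D st E"
    unfolding bracket_def[of D st "bracket D st E"] by (auto simp: bracket_def)
qed (rule br_ext)

lemma br_submod: "is_submod (A1 D) (bracket D st E)"
  unfolding is_submod_def bracket_def
  by (simp add: embY_0 embY_add embY_mult gen_mod_0 gen_mod_add gen_mod_mult[OF embY_A1])

lemma br_homog:
  assumes x: "x \<noteq> 0"
  shows "bracket D st ((*) x ` E) = (*) x ` bracket D st E"
proof -
  have ex: "embY x \<noteq> 0" using embY_nz[OF x] .
  have "embY ` ((*) x ` E) = (*) (embY x) ` (embY ` E)" by (auto simp: embY_mult image_image)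
  then have G: "gen_mod (locS1 D st) (embY ` ((*) x ` E)) = (*) (embY x) ` gen_mod (locS1 D st) (embY ` E)"
    using gen_mod_scale[OF ex] by simp
  show ?thesis
  proof
    show "bracket D st ((*) x ` E) \<subseteq> (*) x ` bracket D st E"
    proof
      fix u assume "u \<in> bracket D st ((*) x ` E)"
      then obtain w where w: "w \<in> gen_mod (locS1 D st) (embY ` E)" "embY u = embY x * w"
        using G by (auto simp: bracket_def)
      then have "w = embY (u / x)" using embY_div[OF x] ex by simp
      then have "u / x \<in> bracket D st E" using w(1) by (simp add: bracket_def)
      moreover have "u = x * (u / x)" using x by simp
      ultimately show "u \<in> (*) x ` bracket D st E" by blast
    qed
    show "(*) x ` bracket D st E \<subseteq> bracket D st ((*) x ` E)"
      using G by (auto simp: bracket_def embY_mult)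
  qed
qed

lemma br_Fbar: "E \<in> Fbar (A1 D) \<Longrightarrow> bracket D st E \<in> Fbar (A1 D)"
  using br_submod br_ext Fbar_ne FbarI by (metis subsetD)

lemma br_semistar: "semistar (A1 D) (bracket D st)"
  unfolding semistar_def
proof (intro conjI allI ballI impI)
  show "bracket D st E \<in> Fbar (A1 D)" if "E \<in> Fbar (A1 D)" for E using br_Fbar[OF that] .
  show "bracket D st ((*) x ` E) = (*) x ` bracket D st E" if "x \<noteq> 0" for x E using br_homog[OF that] .
  show "bracket D st E \<subseteq> bracket D st F" if "E \<subseteq> F" for E F using br_mono[OF that] .
  show "E \<subseteq> bracket D st E" for E using br_ext .
  show "bracket D st (bracket D st E) = bracket D st E" for E using br_idem .
qed

text \<open>Stability: if \<open>u s \<in> E[Y]\<close> and \<open>u t \<in> F[Y]\<close> then \<open>u s t \<in> (E \<inter> F)[Y]\<close>.\<close>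
lemma br_stable: "stable (A1 D) (bracket D st)"
  unfolding stable_def
proof (intro ballI)
  fix E F assume E: "E \<in> Fbar (A1 D)" and F: "F \<in> Fbar (A1 D)"
  have EM: "is_submod (A1 D) E" and FM: "is_submod (A1 D) F" using E F Fbar_submod by blast+
  show "bracket D st (E \<inter> F) = bracket D st E \<inter> bracket D st F"
  proof
    show "bracket D st (E \<inter> F) \<subseteq> bracket D st E \<inter> bracket D st F" using br_mono by blast
    show "bracket D st E \<inter> bracket D st F \<subseteq> bracket D st (E \<inter> F)"
    proof
      fix u assume "u \<in> bracket D st E \<inter> bracket D st F"
      then obtain s t where s: "s \<in> S1 D st" "[:u:] * s \<in> DX E" and t: "t \<in> S1 D st" "[:u:] * t \<in> DX F"
        using bracket_char[OF EM] bracket_char[OF FM] by blast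
      have "([:u:] * s) * t \<in> DX E" using DX_mult_submod(2)[OF EM s(2)] S1_sub t(1) by blast
      moreover have "([:u:] * t) * s \<in> DX F" using DX_mult_submod(2)[OF FM t(2)] S1_sub s(1) by blast
      ultimately have "[:u:] * (s * t) \<in> DX (E \<inter> F)" unfolding DX_Int by (simp add: ac_simps)
      then show "u \<in> bracket D st (E \<inter> F)" using bracketI S1_mult[OF s(1) t(1)] by blast
    qed
  qed
qed

text \<open>Finite type: the coefficients of \<open>u s \<in> E[Y]\<close> generate a finitely generated
  \<open>F \<subseteq> E\<close> with \<open>u \<in> F\<^sup>[\<^sup>\<star>\<^sup>]\<close>.\<close>
lemma br_finite_type: "finite_type (A1 D) (bracket D st)"
  unfolding finite_type_def
proof (intro ballI subset_antisym)
  fix E assume E: "E \<in> Fbar (A1 D)"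
  have EM: "is_submod (A1 D) E" using Fbar_submod[OF E] .
  show "star_f (A1 D) (bracket D st) E \<subseteq> bracket D st E"
    unfolding star_f_def using br_mono by blast
  show "bracket D st E \<subseteq> star_f (A1 D) (bracket D st) E"
  proof
    fix u assume "u \<in> bracket D st E"
    then obtain s where s: "s \<in> S1 D st" "[:u:] * s \<in> DX E" using bracket_char[OF EM] by blast
    define h where "h = [:u:] * s"
    obtain e where e: "e \<in> E" "e \<noteq> 0" using Fbar_ne[OF E] by blast
    define T where "T = insert e (coeff h ` {..degree h})"
    have TE: "T \<subseteq> E" unfolding T_def h_def using e(1) DX_D[OF s(2)] by blast
    have "gen_mod (A1 D) T \<noteq> {0}" using gen_mod_sub[of T "A1 D"] e(2) unfolding T_def by blast
    then have fg: "fg_frac (A1 D) (gen_mod (A1 D) T)"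
      using frac_domain.fg_gen[OF frac_domain.intro[OF A1_subring A1_qf]] T_def by simp
    have "coeff h i \<in> gen_mod (A1 D) T" for i
      using gen_mod_sub[of T "A1 D"] gen_mod_0 unfolding T_def by (cases "i \<le> degree h") (auto simp: coeff_eq_0)
    then have "u \<in> bracket D st (gen_mod (A1 D) T)" using bracketI s(1) unfolding h_def by (blast intro: DX_I)
    then show "u \<in> star_f (A1 D) (bracket D st) E"
      using sf_memI[OF fg gen_mod_subset_submod[OF EM TE]] by blast
  qed
qed

lemma br_tilde: "eq_on_Fbar (A1 D) (tilde (A1 D) (bracket D st)) (bracket D st)"
proof -
  interpret br: semistar_domain "A1 D" "bracket D st"
    using A1_subring A1_qf br_semistar by unfold_locales
  show ?thesis using br.stable_tilde_eq[OF br_stable br_finite_type] .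
qed

end

context frac_domain
begin

text \<open>Every nonzero ideal of \<open>D\<close> not containing \<open>1\<close> lies in a prime ideal: this is
  \<open>zorn_qmax\<close> for the identity operation, whose quasi-ideals are all ideals.\<close>
lemma ideal_in_prime:
  assumes I: "is_ideal D I" "I \<noteq> {0}" "1 \<notin> I"
  shows "\<exists>P. prime_ideal D P \<and> I \<subseteq> P"
proof -
  interpret id: semistar_domain D "\<lambda>E. E"
    by unfold_locales (simp_all add: sub qf semistar_def)
  have "1 \<notin> star_f D (\<lambda>E. E) I" using I(3) unfolding star_f_def by blast
  then show ?thesis using id.zorn_qmax[OF I(1,2)] id.qmax_prime by blast
qed

text \<open>The contraction to \<open>D[X]\<close> of a prime ideal of \<open>K[X]\<close> is an upper to zero, hence
  belongs to \<open>\<Delta>\<^sub>1\<^sup>\<star>\<close> for every \<open>\<star>\<close>.\<close>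
lemma contraction_in_Delta:
  assumes P: "prime_ideal (range to_fract) P"
  shows "{q \<in> DX D. to_fract q \<in> P} \<in> Delta1 D st"
proof -
  let ?Q = "{q \<in> DX D. to_fract q \<in> P}"
  have PM: "is_submod (range to_fract) P" using ideal_submod[OF prime_ideal_ideal[OF P]] .
  have P1: "to_fract 1 \<notin> P" using prime_ideal_one[OF P] by (simp add: to_fract_1)
  have P0: "to_fract 0 \<in> P" using prime_ideal_0[OF P] by (simp add: to_fract_0)
  have "prime_ideal (DX D) ?Q"
    unfolding prime_ideal_def is_ideal_def is_submod_def
    using subring_0[OF D1_subring] subring_1[OF D1_subring] subring_add[OF D1_subring]
      subring_mult[OF D1_subring] P0 P1 submod_add[OF PM] submod_mult[OF PM rangeI]
      prime_ideal_mult[OF P rangeI rangeI]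
    by (auto simp: to_fract_add to_fract_mult)
  moreover have "contr D ?Q = {0}"
  proof (intro subset_antisym subsetI)
    fix x assume "x \<in> contr D ?Q"
    then have xP: "to_fract [:x:] \<in> P" unfolding contr_def by simp
    show "x \<in> {0}"
    proof (rule ccontr)
      assume "x \<notin> {0}"
      then have "[:inverse x:] * [:x:] = 1" by simp
      then show False using submod_mult[OF PM rangeI xP] P1 by (metis to_fract_mult)
    qed
  next
    show "x \<in> contr D ?Q" if "x \<in> {0}" for x
      using that subring_0[OF sub] subring_0[OF D1_subring] P0 by (simp add: contr_def)
  qed
  ultimately show ?thesis unfolding Delta1_def by simp
qed

text \<open>Every \<open>u \<in> D[X]\<^sup>[\<^sup>\<star>\<^sup>]\<close> lies in \<open>K[X]\<close>: otherwise the ideal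
  \<open>(K[X] :_{K[X]} u)\<close> is proper, sits in a prime ideal of \<open>K[X]\<close>, and its contraction
  (an element of \<open>\<Delta>\<^sub>1\<^sup>\<star>\<close>) would contain all coefficients of the \<open>s \<in> S\<^sub>1\<^sup>\<star>\<close>
  with \<open>u s \<in> D[X][Y]\<close>.\<close>
lemma bracket_D1_poly:
  assumes u: "u \<in> bracket D st (A1 D)"
  shows "u \<in> range to_fract"
proof -
  let ?K = "range (to_fract :: 'f poly \<Rightarrow> 'f poly fract)"
  interpret KX: frac_domain ?K
  proof
    show "is_subring ?K" by (rule to_fract_subring) (simp add: is_subring_def)
    show "quot_field_of ?K"
      unfolding quot_field_of_def using fract_repr to_fract_eq0 by (metis rangeI)
  qed
  obtain s where s: "s \<in> S1 D st" "[:u:] * s \<in> DX (A1 D)"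
    using bracketD[OF subring_submod[OF A1_subring] u] by blast
  have cs: "\<exists>q\<in>DX D. coeff s i = to_fract q" for i
    using DX_D[OF subsetD[OF S1_sub s(1)], of i] unfolding A1_def by blast
  have cu: "u * coeff s i \<in> ?K" for i
    using DX_D[OF s(2), of i] unfolding A1_def by auto
  define I where "I = {x \<in> ?K. x * u \<in> ?K}"
  have "is_ideal ?K I"
    unfolding I_def is_ideal_def is_submod_def
    using subring_0[OF KX.sub] subring_add[OF KX.sub] subring_mult[OF KX.sub]
    by (auto simp: distrib_right mult.assoc)
  moreover have "I \<noteq> {0}"
  proof -
    obtain a b where ab: "b \<noteq> 0" "u = to_fract a / to_fract b" using fract_repr by blast
    then have "to_fract b \<in> I" "to_fract b \<noteq> 0" unfolding I_def by (simp_all add: to_fract_eq0)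
    then show ?thesis by blast
  qed
  moreover have "1 \<in> I"
  proof (rule ccontr)
    assume "1 \<notin> I"
    then obtain P where P: "prime_ideal ?K P" "I \<subseteq> P"
      using KX.ideal_in_prime \<open>is_ideal ?K I\<close> \<open>I \<noteq> {0}\<close> by blast
    let ?Q = "{q \<in> DX D. to_fract q \<in> P}"
    have "coeff s i \<in> to_fract ` ?Q" for i
    proof -
      obtain q where q: "q \<in> DX D" "coeff s i = to_fract q" using cs by blast
      then have "to_fract q \<in> I" using cu[of i] unfolding I_def by (simp add: mult.commute)
      then show ?thesis using q P(2) by blast
    qed
    then have "s \<in> polyY ?Q" unfolding polyY_def by blast
    then show False using s(1) contraction_in_Delta[OF P(1)] unfolding S1_def by blast
  qed
  ultimately show ?thesis unfolding I_def by simp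
qed

end

context semistar_domain
begin

lemma qmax_extension_in_Delta:
  assumes M: "M \<in> QMax D sf"
  shows "DX M \<in> Delta1 D st"
proof -
  have Mp: "prime_ideal D M" using qmax_prime[OF M] .
  have MD: "M \<subseteq> D" using ideal_sub[OF prime_ideal_ideal[OF Mp]] .
  have "contr D (DX M) = M"
    using MD DX_const[OF _ prime_ideal_0[OF Mp]] DX_D[of "[:_:]" M 0] by (auto simp: contr_def)
  moreover have "sf M \<subset> st D" using sf_proper_iff[OF MD] qmax_one[OF M] by blast
  ultimately show ?thesis using DX_prime[OF sub Mp] unfolding Delta1_def by simp
qed

text \<open>If \<open>p \<in> D[X]\<^sup>[\<^sup>\<star>\<^sup>]\<close> with \<open>p \<in> K[X]\<close>, then \<open>p \<in> D\<^sub>M[X]\<close> for every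
  quasi-\<open>\<star>\<^sub>f\<close>-maximal \<open>M\<close>: some coefficient \<open>q\<close> of the witness \<open>s\<close> has a coefficient
  outside \<open>M\<close>, i.e. a unit of \<open>D\<^sub>M\<close>, and \<open>p q \<in> D[X]\<close>.\<close>
lemma bracket_D1_local:
  assumes u: "to_fract p \<in> bracket D st (A1 D)" and M: "M \<in> QMax D sf"
  shows "p \<in> DX (localization D M)"
proof -
  obtain s where s: "s \<in> S1 D st" "[:to_fract p:] * s \<in> DX (A1 D)"
    using bracketD[OF subring_submod[OF A1_subring] u] by blast
  have Mp: "prime_ideal D M" using qmax_prime[OF M] .
  have "s \<notin> polyY (DX M)" using s(1) qmax_extension_in_Delta[OF M] unfolding S1_def by blast
  then obtain i where i: "coeff s i \<notin> to_fract ` DX M" unfolding polyY_def by blast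
  obtain q where q: "q \<in> DX D" "coeff s i = to_fract q"
    using DX_D[OF subsetD[OF S1_sub s(1)], of i] unfolding A1_def by blast
  obtain k where k: "coeff q k \<notin> M" using i q(2) unfolding DX_def by blast
  have "to_fract p * to_fract q \<in> A1 D" using DX_D[OF s(2), of i] q(2) by simp
  then have pq: "p * q \<in> DX D" unfolding A1_def by (auto simp flip: to_fract_mult simp: to_fract_inj)
  let ?R = "localization D M"
  have DR: "DX D \<subseteq> DX ?R" using DX_mono[OF loc_contains[OF sub prime_ideal_one[OF Mp]]] .
  have "coeff q k \<noteq> 0" using k prime_ideal_0[OF Mp] by metis
  moreover have "inverse (coeff q k) \<in> ?R"
    using DX_D[OF q(1), of k] k subring_1[OF sub] unfolding localization_def by (force simp: divide_inverse)
  ultimately show ?thesis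
    using unit_coeff_cancel[OF loc_subring[OF sub Mp]] q(1) pq DR by blast
qed

text \<open>If \<open>D\<^sup>\<star> = D\<close> then \<open>D[X]\<^sup>[\<^sup>\<star>\<^sup>] = D[X]\<close>: the coefficients of an element of
  \<open>D[X]\<^sup>[\<^sup>\<star>\<^sup>]\<close> lie in \<open>\<Inter>\<^sub>M D\<^sub>M = D\<^sup>\<star>\<^sup>~ \<subseteq> D\<^sup>\<star> = D\<close>.\<close>
lemma bracket_D1:
  assumes eq: "st D = D"
  shows "bracket D st (A1 D) = A1 D"
proof
  show "bracket D st (A1 D) \<subseteq> A1 D"
  proof
    fix u assume u: "u \<in> bracket D st (A1 D)"
    then obtain p where p: "u = to_fract p" using bracket_D1_poly by blast
    have "coeff p j \<in> tilde D st D" for j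
      unfolding tilde_mem
    proof
      fix M assume M: "M \<in> QMax D sf"
      have "coeff p j \<in> localization D M" using DX_D[OF bracket_D1_local[OF u[unfolded p] M]] .
      then show "coeff p j \<in> gen_mod (localization D M) D"
        using gen_mod_mult gen_mod_sub subring_1[OF sub] by fastforce
    qed
    then have "coeff p j \<in> D" for j using tilde_le_sf[OF subring_Fbar] sf_le[OF subring_Fbar] eq by blast
    then show "u \<in> A1 D" unfolding A1_def p by (blast intro: DX_I)
  qed
qed (rule br_ext)

end

theorem theorem2p3:
  fixes D :: "'k::field set" and st :: "'k set \<Rightarrow> 'k set"
  assumes "is_subring D" and "quot_field_of D" and "semistar D st"
  shows "semistar (A1 D) (bracket D st) \<and> stable (A1 D) (bracket D st)
       \<and> finite_type (A1 D) (bracket D st)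
       \<and> eq_on_Fbar (A1 D) (tilde (A1 D) (bracket D st)) (bracket D st)
       \<and> (st D = D \<longrightarrow> bracket D st (A1 D) = A1 D)
       \<and> eq_on_Fbar (A1 D) (bracket D (tilde D st)) (bracket D st)
       \<and> eq_on_Fbar (A1 D) (bracket D (star_f D st)) (bracket D st)"
proof -
  interpret semistar_domain D st using assms by unfold_locales
  have "bracket D (tilde D st) = bracket D st" using bracket_cong[OF Delta_tilde] .
  moreover have "bracket D (star_f D st) = bracket D st" using bracket_cong[OF Delta_sf] .
  ultimately show ?thesis
    using br_semistar br_stable br_finite_type br_tilde bracket_D1 by (simp add: eq_on_Fbar_def)
qed

end
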